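(* Let $\delta,D\ge0$, $(X,x,\Gamma)\in\mathcal{M}(\delta,D)$ and $Y=\mathrm{QC\text{-}Hull}(\Lambda(\Gamma))$. Then for every $r>0$ the limits $$\lim_{T\to+\infty}\frac{\log\mathrm{Cov}(\overline B(x,T)\cap Y,r)}{T}\quad\text{and}\quad\lim_{T\to+\infty}\frac{\log\mathrm{Pack}(\overline B(x,T)\cap Y,r)}{T}$$ exist, do not depend on $r$, are equal to each other, and equal $h_\Gamma$, which is finite.
   Context: For $Z$ a subset of a metric space, $\mathrm{Pack}(Z,r)$ is the maximal cardinality of a $2r$-separated subset of $Z$ (pairwise distances $>2r$), and $\mathrm{Cov}(Z,r)$ is the minimal cardinality of an $r$-dense subset $S\subseteq Z$ (every point of $Z$ within distance $\le r$ of $S$). Gromov product $(y,z)_x=\frac12(d(x,y)+d(x,z)-d(y,z))$; $X$ is $\delta$-hyperbolic if $(x,z)_w\geq\min\{(x,y)_w,(y,z)_w\}-\delta$ for all points. $\Lambda(\Gamma)$: accumulation points in the Gromov boundary of $\Gamma x$; elementary means $\#\Lambda(\Gamma)\le2$. $\mathrm{QC\text{-}Hull}(C)$: union of geodesic lines with both endpoints in $C$. Quasiconvex-cocompact with codiameter $\le D$: for all $y,y'\in\mathrm{QC\text{-}Hull}(\Lambda(\Gamma))$ there is $g\in\Gamma$ with $d(gy,y')\le D$. $\mathcal{M}(\delta,D)$: triples $(X,x,\Gamma)$, $X$ proper geodesic $\delta$-hyperbolic, $\Gamma\le\mathrm{Isom}(X)$ discrete, torsion-free, non-elementary, quasiconvex-cocompact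 with codiameter $\le D$, $x\in\mathrm{QC\text{-}Hull}(\Lambda(\Gamma))$. Critical exponent $h_\Gamma=\limsup_{T\to\infty}\frac1T\log\#(\Gamma x\cap\overline B(x,T))$. *)

theory Defs
  imports "HOL-Analysis.Analysis" "HOL-Library.Extended_Nat"
begin

text \<open>The metric space X is the whole type 'a.\<close>

definition gromov_product :: "'a::metric_space \<Rightarrow> 'a \<Rightarrow> 'a \<Rightarrow> real" where
  "gromov_product w y z = (dist w y + dist w z - dist y z) / 2"

definition proper_space_pred :: "'a::metric_space itself \<Rightarrow> bool" where
  "proper_space_pred _ \<longleftrightarrow> (\<forall>(a::'a) r. compact (cball a r))"

definition geodesic_space :: "'a::metric_space itself \<Rightarrow> bool" where
  "geodesic_space _ \<longleftrightarrow> (\<forall>(a::'a) b. \<exists>\<gamma>::real \<Rightarrow> 'a. \<gamma> 0 = a \<and> \<gamma> (dist a b) = b \<and>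
      (\<forall>s\<in>{0..dist a b}. \<forall>t\<in>{0..dist a b}. dist (\<gamma> s) (\<gamma> t) = \<bar>s - t\<bar>))"

definition gromov_hyperbolic :: "'a::metric_space itself \<Rightarrow> real \<Rightarrow> bool" where
  "gromov_hyperbolic _ \<delta> \<longleftrightarrow> (\<forall>(w::'a) x y z.
      gromov_product w x z \<ge> min (gromov_product w x y) (gromov_product w y z) - \<delta>)"

definition conv_infty :: "'a::metric_space \<Rightarrow> (nat \<Rightarrow> 'a) \<Rightarrow> bool" where
  "conv_infty x0 s \<longleftrightarrow> (\<forall>M. \<exists>N. \<forall>n\<ge>N. \<forall>m\<ge>N. gromov_product x0 (s n) (s m) \<ge> M)"

definition equiv_infty :: "'a::metric_space \<Rightarrow> (nat \<Rightarrow> 'a) \<Rightarrow> (nat \<Rightarrow> 'a) \<Rightarrow> bool" where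
  "equiv_infty x0 s t \<longleftrightarrow> (\<forall>M. \<exists>N. \<forall>n\<ge>N. \<forall>m\<ge>N. gromov_product x0 (s n) (t m) \<ge> M)"

definition gromov_boundary :: "'a::metric_space \<Rightarrow> (nat \<Rightarrow> 'a) set set" where
  "gromov_boundary x0 = {{t. conv_infty x0 t \<and> equiv_infty x0 s t} | s. conv_infty x0 s}"

definition isometry :: "('a::metric_space \<Rightarrow> 'a) \<Rightarrow> bool" where
  "isometry g \<longleftrightarrow> bij g \<and> (\<forall>a b. dist (g a) (g b) = dist a b)"

definition isom_group :: "('a::metric_space \<Rightarrow> 'a) set \<Rightarrow> bool" where
  "isom_group \<Gamma> \<longleftrightarrow> (\<forall>g\<in>\<Gamma>. isometry g) \<and> id \<in> \<Gamma> \<and>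
     (\<forall>g\<in>\<Gamma>. \<forall>h\<in>\<Gamma>. g \<circ> h \<in> \<Gamma>) \<and> (\<forall>g\<in>\<Gamma>. inv g \<in> \<Gamma>)"

definition discrete_group :: "('a::metric_space \<Rightarrow> 'a) set \<Rightarrow> bool" where
  "discrete_group \<Gamma> \<longleftrightarrow> (\<forall>a R. finite {g\<in>\<Gamma>. dist (g a) a \<le> R})"

definition torsion_free :: "('a \<Rightarrow> 'a) set \<Rightarrow> bool" where
  "torsion_free \<Gamma> \<longleftrightarrow> (\<forall>g\<in>\<Gamma>. \<forall>n::nat. n > 0 \<longrightarrow> g ^^ n = id \<longrightarrow> g = id)"

definition limit_set :: "('a::metric_space \<Rightarrow> 'a) set \<Rightarrow> 'a \<Rightarrow> (nat \<Rightarrow> 'a) set set" where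
  "limit_set \<Gamma> x = {\<xi>\<in>gromov_boundary x. \<exists>s\<in>\<xi>. \<forall>n. s n \<in> (\<lambda>g. g x) ` \<Gamma>}"

definition elementary :: "('a::metric_space \<Rightarrow> 'a) set \<Rightarrow> 'a \<Rightarrow> bool" where
  "elementary \<Gamma> x \<longleftrightarrow> finite (limit_set \<Gamma> x) \<and> card (limit_set \<Gamma> x) \<le> 2"

definition geodesic_line :: "(real \<Rightarrow> 'a::metric_space) \<Rightarrow> bool" where
  "geodesic_line \<gamma> \<longleftrightarrow> (\<forall>s t. dist (\<gamma> s) (\<gamma> t) = \<bar>s - t\<bar>)"

definition QC_Hull :: "'a::metric_space \<Rightarrow> (nat \<Rightarrow> 'a) set set \<Rightarrow> 'a set" where
  "QC_Hull x0 C = \<Union> {range \<gamma> | \<gamma>. geodesic_line \<gamma> \<and>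
      (\<exists>\<xi>\<in>C. (\<lambda>n. \<gamma> (real n)) \<in> \<xi>) \<and> (\<exists>\<eta>\<in>C. (\<lambda>n. \<gamma> (- real n)) \<in> \<eta>)}"

definition qc_cocompact :: "('a::metric_space \<Rightarrow> 'a) set \<Rightarrow> 'a \<Rightarrow> real \<Rightarrow> bool" where
  "qc_cocompact \<Gamma> x D \<longleftrightarrow> (\<forall>y\<in>QC_Hull x (limit_set \<Gamma> x). \<forall>y'\<in>QC_Hull x (limit_set \<Gamma> x).
      \<exists>g\<in>\<Gamma>. dist (g y) y' \<le> D)"

definition class_M :: "real \<Rightarrow> real \<Rightarrow> 'a::metric_space \<Rightarrow> ('a \<Rightarrow> 'a) set \<Rightarrow> bool" where
  "class_M \<delta> D x \<Gamma> \<longleftrightarrow> proper_space_pred TYPE('a) \<and> geodesic_space TYPE('a) \<and>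
     gromov_hyperbolic TYPE('a) \<delta> \<and> isom_group \<Gamma> \<and> discrete_group \<Gamma> \<and> torsion_free \<Gamma> \<and>
     \<not> elementary \<Gamma> x \<and> qc_cocompact \<Gamma> x D \<and> x \<in> QC_Hull x (limit_set \<Gamma> x)"

definition Pack :: "'a::metric_space set \<Rightarrow> real \<Rightarrow> enat" where
  "Pack Z r = (SUP S\<in>{S. S \<subseteq> Z \<and> (\<forall>a\<in>S. \<forall>b\<in>S. a \<noteq> b \<longrightarrow> dist a b > 2 * r)}.
                 (if finite S then enat (card S) else \<infinity>))"

definition Cov :: "'a::metric_space set \<Rightarrow> real \<Rightarrow> enat" where
  "Cov Z r = (INF S\<in>{S. S \<subseteq> Z \<and> (\<forall>z\<in>Z. \<exists>s\<in>S. dist z s \<le> r)}.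
                 (if finite S then enat (card S) else \<infinity>))"

definition crit_exp :: "('a::metric_space \<Rightarrow> 'a) set \<Rightarrow> 'a \<Rightarrow> ereal" where
  "crit_exp \<Gamma> x = Limsup at_top
     (\<lambda>T::real. ereal (ln (real (card ((\<lambda>g. g x) ` \<Gamma> \<inter> cball x T))) / T))"

end

theory Submission
  imports Defs "HOL-Library.Diagonal_Subsequence"
begin

text \<open>
  Let \<open>N(T)\<close> be the number of \<open>g \<in> \<Gamma>\<close> with \<open>d(g x, x) \<le> T\<close>; as \<open>\<Gamma>\<close> acts freely,
  \<open>N(T)\<close> counts the orbit points in \<open>B(x, T)\<close>, so \<open>h\<^sub>\<Gamma>\<close> is the growth rate of \<open>N\<close>.

  The hull \<open>Y\<close> is \<open>16\<delta>\<close>-quasiconvex: a geodesic between two points of \<open>Y\<close> is fellow-travelled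
  by geodesic segments joining far points of the lines through its endpoints, and by properness
  these segments subconverge to a geodesic line with both endpoints in \<open>\<Lambda>(\<Gamma>)\<close>. Cutting a
  geodesic from \<open>x\<close> to \<open>g x\<close> at distance \<open>T\<close> and using cocompactness then gives
  \<open>N(T + S) \<le> N(T + c) N(S + c)\<close> with \<open>c = 16\<delta> + D\<close>, so \<open>ln N(T) / T\<close> converges by
  Fekete's lemma.

  Translates of a finite \<open>r/2\<close>-net of \<open>B(x, D)\<close> by the elements counted in \<open>N(T + D)\<close> give
  an \<open>r\<close>-dense subset of \<open>B(x, T) \<inter> Y\<close>, while a maximal \<open>2r\<close>-separated set of orbit points in
  \<open>B(x, T)\<close> is a packing whose \<open>2r\<close>-neighbourhoods contain all \<open>N(T)\<close> orbit points. Since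
  \<open>Pack \<le> Cov\<close>, both are squeezed between constant multiples of \<open>N(T)\<close> and \<open>N(T + D)\<close>.
\<close>

section \<open>Gromov products and thin triangles\<close>

lemma gromov_product_commute: "gromov_product w y z = gromov_product w z y"
  unfolding gromov_product_def by (simp add: dist_commute)

lemma gromov_product_le_dist: "gromov_product w y z \<le> dist w z"
  unfolding gromov_product_def using dist_triangle[of w y z] by (simp add: dist_commute)

lemma gromov_product_add: "gromov_product y x a + gromov_product x y a = dist x y"
  unfolding gromov_product_def by (simp add: dist_commute field_simps)

lemma gromov_product_base_lipschitz: "\<bar>gromov_product w y z - gromov_product w' y z\<bar> \<le> dist w w'"
  unfolding gromov_product_def abs_le_iff
  using dist_triangle[of w y w'] dist_triangle[of w' y w] dist_triangle[of w z w']
    dist_triangle[of w' z w] dist_commute[of w w']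
  by (auto simp: field_simps)

lemma gromov_product_lipschitz_left: "\<bar>gromov_product w y z - gromov_product w y' z\<bar> \<le> dist y y'"
  unfolding gromov_product_def abs_le_iff
  using dist_triangle[of w y y'] dist_triangle[of w y' y] dist_triangle[of y z y']
    dist_triangle[of y' z y] dist_commute[of y y']
  by (auto simp: field_simps)

lemma gromov_product_lipschitz_right: "\<bar>gromov_product w y z - gromov_product w y z'\<bar> \<le> dist z z'"
  using gromov_product_lipschitz_left[of w z y z'] by (simp add: gromov_product_commute)

lemma gromov_hyperbolicD:
  assumes "gromov_hyperbolic TYPE('a::metric_space) \<delta>"
  shows "gromov_product (w::'a) a c \<ge> min (gromov_product w a b) (gromov_product w b c) - \<delta>"
  using assms unfolding gromov_hyperbolic_def by blast

lemma gromov_hyperbolic_nonneg: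
  assumes "gromov_hyperbolic TYPE('a::metric_space) \<delta>"
  shows "\<delta> \<ge> 0"
  using gromov_hyperbolicD[OF assms, of "undefined::'a" undefined undefined undefined]
  by (simp add: gromov_product_def)

lemma gromov_hyperbolic_zero_product:
  assumes "gromov_hyperbolic TYPE('a::metric_space) \<delta>" and "gromov_product (w::'a) a b = 0"
  shows "gromov_product w a c \<le> \<delta> \<or> gromov_product w b c \<le> \<delta>"
  using gromov_hyperbolicD[OF assms(1), of w a c b] assms(2)
  by (auto simp: gromov_product_commute[of w c b] min_def split: if_splits)

definition metric_between :: "'a::metric_space \<Rightarrow> 'a \<Rightarrow> 'a \<Rightarrow> bool" where
  "metric_between u p v \<longleftrightarrow> dist u p + dist p v = dist u v"

lemma metric_between_commute: "metric_between u p v \<Longrightarrow> metric_between v p u"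
  unfolding metric_between_def by (simp add: dist_commute)

lemma metric_between_refl: "metric_between u u v"
  unfolding metric_between_def by simp

lemma gromov_product_metric_between:
  "metric_between u p v \<Longrightarrow> gromov_product u p v = dist u p"
  unfolding metric_between_def gromov_product_def by simp

lemma gromov_product_metric_between_ge:
  assumes "metric_between u p v" "dist u x \<le> C"
  shows "gromov_product x v p \<ge> dist u p - C"
  using assms dist_triangle[of u v x] dist_triangle[of u p x]
  unfolding metric_between_def gromov_product_def by (simp add: dist_commute)

lemma geodesic_space_point_between:
  assumes "geodesic_space TYPE('a::metric_space)" "0 \<le> t" "t \<le> dist u (v::'a)"
  obtains p where "dist u p = t" "metric_between u p v"
proof -
  obtain \<gamma> :: "real \<Rightarrow> 'a" where g: "\<gamma> 0 = u" "\<gamma> (dist u v) = v"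
    "\<forall>s\<in>{0..dist u v}. \<forall>r\<in>{0..dist u v}. dist (\<gamma> s) (\<gamma> r) = \<bar>s - r\<bar>"
    using assms(1) unfolding geodesic_space_def by blast
  have "dist u (\<gamma> t) = t" "dist (\<gamma> t) v = dist u v - t"
    using g(3)[rule_format, of 0 t] g(3)[rule_format, of t "dist u v"] g(1,2) assms(2,3) by simp_all
  then show thesis using that[of "\<gamma> t"] unfolding metric_between_def by simp
qed

lemma hyperbolic_fellow_travel:
  assumes H: "gromov_hyperbolic TYPE('a::metric_space) \<delta>"
    and "metric_between u p v" "metric_between u q (w::'a)"
    and "dist u p = t" "dist u q = t" "t \<le> gromov_product u v w"
  shows "dist p q \<le> 4 * \<delta>"
proof -
  have "gromov_product u p v = t" "gromov_product u w q = t"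
    using assms(2-5) gromov_product_metric_between gromov_product_commute by metis+
  then have "gromov_product u p w \<ge> t - \<delta>"
    using gromov_hyperbolicD[OF H, of u p v w] assms(6) by simp
  then have "gromov_product u p q \<ge> t - 2 * \<delta>"
    using gromov_hyperbolicD[OF H, of u p w q] \<open>gromov_product u w q = t\<close>
      gromov_hyperbolic_nonneg[OF H] by (simp add: min_def split: if_splits)
  then show ?thesis unfolding gromov_product_def using assms(4,5) by simp
qed

lemma hyperbolic_between_near_between:
  assumes H: "gromov_hyperbolic TYPE('a::metric_space) \<delta>" and G: "geodesic_space TYPE('a)"
    and bp: "metric_between u p (v::'a)" and gp: "gromov_product u v w \<ge> dist u v - \<delta>"
  obtains p' where "metric_between u p' w" "dist p p' \<le> 6 * \<delta>"
proof -
  have d0: "\<delta> \<ge> 0" using gromov_hyperbolic_nonneg[OF H] .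
  have gw: "gromov_product u v w \<le> dist u w" by (rule gromov_product_le_dist)
  have pv: "dist p v = dist u v - dist u p"
    using bp unfolding metric_between_def by simp
  have close: "dist q q' \<le> 4 * \<delta>"
    if "metric_between u q v" "dist u q \<le> dist u v - \<delta>" "metric_between u q' w" "dist u q' = dist u q"
    for q q'
    using hyperbolic_fellow_travel[OF H that(1,3), of "dist u q"] that(2,4) gp by linarith
  consider "dist u p \<le> dist u v - \<delta>" | "dist u v - \<delta> < dist u p" "\<delta> \<le> dist u v"
    | "dist u v < \<delta>" by linarith
  then show thesis
  proof cases
    case 1
    obtain p' where p': "dist u p' = dist u p" "metric_between u p' w"
      using geodesic_space_point_between[OF G, of "dist u p" u w] gp gw 1 by auto
    show thesis using that[OF p'(2)] close[OF bp 1 p'(2,1)] d0 by simp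
  next
    case 2
    obtain p0 where p0: "dist u p0 = dist u v - \<delta>" "metric_between u p0 v"
      using geodesic_space_point_between[OF G, of "dist u v - \<delta>" u v] 2 d0 by auto
    obtain p' where p': "dist u p' = dist u v - \<delta>" "metric_between u p' w"
      using geodesic_space_point_between[OF G, of "dist u v - \<delta>" u w] gp gw 2 by auto
    have "dist p0 v = \<delta>" using p0 unfolding metric_between_def by simp
    then have "dist p p0 \<le> 2 * \<delta>"
      using dist_triangle[of p p0 v] pv 2 by (simp add: dist_commute)
    moreover have "dist p0 p' \<le> 4 * \<delta>" using close[OF p0(2) _ p'(2)] p0 p' by simp
    ultimately show thesis using that[OF p'(2)] dist_triangle[of p p' p0] by linarith
  next
    case 3
    then have "dist p u \<le> 6 * \<delta>"
      using pv d0 zero_le_dist[of p v] by (simp add: dist_commute)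
    then show thesis using that[OF metric_between_refl] by blast
  qed
qed

lemma hyperbolic_quadrilateral:
  assumes H: "gromov_hyperbolic TYPE('a::metric_space) \<delta>" and G: "geodesic_space TYPE('a)"
    and "gromov_product x a y \<le> \<delta>" "gromov_product y a b \<le> \<delta>" and "metric_between x p (y::'a)"
  obtains q where "metric_between a q b" "dist p q \<le> 12 * \<delta>"
proof -
  have "gromov_product y x a \<ge> dist y x - \<delta>"
    using gromov_product_add[of y x a] assms(3) by (simp add: gromov_product_commute dist_commute)
  then obtain p' where p': "metric_between y p' a" "dist p p' \<le> 6 * \<delta>"
    using hyperbolic_between_near_between[OF H G metric_between_commute[OF assms(5)]] by blast
  have "gromov_product a y b \<ge> dist a y - \<delta>"
    using gromov_product_add[of a y b] assms(4) by (simp add: gromov_product_commute dist_commute)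
  then obtain q where "metric_between a q b" "dist p' q \<le> 6 * \<delta>"
    using hyperbolic_between_near_between[OF H G metric_between_commute[OF p'(1)]] by blast
  then show thesis using that p'(2) dist_triangle[of p q p'] by auto
qed

lemma hyperbolic_between_near_segment:
  assumes H: "gromov_hyperbolic TYPE('a::metric_space) \<delta>" and "metric_between a q (b::'a)"
    and \<gamma>: "\<gamma> 0 = a" "\<gamma> (dist a b) = b"
      "\<And>s r. s \<in> {0..dist a b} \<Longrightarrow> r \<in> {0..dist a b} \<Longrightarrow> dist (\<gamma> s) (\<gamma> r) = \<bar>s - r\<bar>"
  shows "dist q (\<gamma> (dist a q)) \<le> 4 * \<delta>" "dist a q \<le> dist a b"
proof -
  show le: "dist a q \<le> dist a b"
    using assms(2) unfolding metric_between_def by (metis le_add_same_cancel1 zero_le_dist)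
  have "dist a (\<gamma> (dist a q)) = dist a q" "dist (\<gamma> (dist a q)) b = dist a b - dist a q"
    using \<gamma>(3)[of 0 "dist a q"] \<gamma>(3)[of "dist a q" "dist a b"] \<gamma>(1,2) le
    by simp_all
  then have "metric_between a (\<gamma> (dist a q)) b"
    unfolding metric_between_def by simp
  moreover have "gromov_product a b b = dist a b" unfolding gromov_product_def by simp
  ultimately show "dist q (\<gamma> (dist a q)) \<le> 4 * \<delta>"
    using hyperbolic_fellow_travel[OF H assms(2)] \<open>dist a (\<gamma> (dist a q)) = dist a q\<close> le by simp
qed

section \<open>Points of the Gromov boundary\<close>

lemma conv_infty_dist_unbounded:
  assumes "conv_infty x s"
  obtains N where "\<And>n. n \<ge> N \<Longrightarrow> dist x (s n) \<ge> M"
proof -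
  obtain N where "\<forall>n\<ge>N. \<forall>m\<ge>N. gromov_product x (s n) (s m) \<ge> M"
    using assms unfolding conv_infty_def by blast
  moreover have "gromov_product x (s n) (s n) = dist x (s n)" for n
    unfolding gromov_product_def by simp
  ultimately show thesis using that by metis
qed

lemma conv_infty_base_change: "conv_infty x s \<Longrightarrow> conv_infty y s"
  unfolding conv_infty_def
proof (intro allI)
  fix M assume "\<forall>M. \<exists>N. \<forall>n\<ge>N. \<forall>m\<ge>N. M \<le> gromov_product x (s n) (s m)"
  then obtain N where N: "\<forall>n\<ge>N. \<forall>m\<ge>N. M + dist x y \<le> gromov_product x (s n) (s m)" by blast
  have "M \<le> gromov_product y (s n) (s m)" if "n \<ge> N" "m \<ge> N" for n m
    using N[rule_format, OF that] gromov_product_base_lipschitz[of x "s n" "s m" y]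
    unfolding abs_le_iff by linarith
  then show "\<exists>N. \<forall>n\<ge>N. \<forall>m\<ge>N. M \<le> gromov_product y (s n) (s m)" by blast
qed

lemma equiv_infty_base_change: "equiv_infty x s t \<Longrightarrow> equiv_infty y s t"
  unfolding equiv_infty_def
proof (intro allI)
  fix M assume "\<forall>M. \<exists>N. \<forall>n\<ge>N. \<forall>m\<ge>N. M \<le> gromov_product x (s n) (t m)"
  then obtain N where N: "\<forall>n\<ge>N. \<forall>m\<ge>N. M + dist x y \<le> gromov_product x (s n) (t m)" by blast
  have "M \<le> gromov_product y (s n) (t m)" if "n \<ge> N" "m \<ge> N" for n m
    using N[rule_format, OF that] gromov_product_base_lipschitz[of x "s n" "t m" y]
    unfolding abs_le_iff by linarith
  then show "\<exists>N. \<forall>n\<ge>N. \<forall>m\<ge>N. M \<le> gromov_product y (s n) (t m)" by blast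
qed

lemma gromov_boundary_conv_infty: "\<xi> \<in> gromov_boundary x \<Longrightarrow> s \<in> \<xi> \<Longrightarrow> conv_infty x s"
  unfolding gromov_boundary_def by blast

lemma gromov_boundary_mem_close_subseq:
  assumes xi: "\<xi> \<in> gromov_boundary x" and s: "s \<in> \<xi>" and \<phi>: "strict_mono \<phi>"
    and d: "\<And>k. dist (t k) (s (\<phi> k)) \<le> C"
  shows "t \<in> \<xi>"
proof -
  obtain s0 where xi0: "\<xi> = {t. conv_infty x t \<and> equiv_infty x s0 t}"
    using xi unfolding gromov_boundary_def by blast
  have cs: "conv_infty x s" and es: "equiv_infty x s0 s" using s xi0 by auto
  have \<phi>_ge: "N \<le> n \<Longrightarrow> N \<le> \<phi> n" for n N using seq_suble[OF \<phi>, of n] by linarith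
  have left: "gromov_product x (t n) z \<ge> gromov_product x (s (\<phi> n)) z - C" for n z
    using gromov_product_lipschitz_left[of x "t n" z "s (\<phi> n)"] d[of n] by linarith
  have right: "gromov_product x z (t m) \<ge> gromov_product x z (s (\<phi> m)) - C" for m z
    using gromov_product_lipschitz_right[of x z "t m" "s (\<phi> m)"] d[of m] by linarith
  have "conv_infty x t"
    unfolding conv_infty_def
  proof
    fix M
    obtain N where N: "\<forall>n\<ge>N. \<forall>m\<ge>N. gromov_product x (s n) (s m) \<ge> M + 2 * C"
      using cs unfolding conv_infty_def by blast
    have "gromov_product x (t n) (t m) \<ge> M" if "n \<ge> N" "m \<ge> N" for n m
      using N[rule_format, OF \<phi>_ge[OF that(1)] \<phi>_ge[OF that(2)]] left[where n=n and z="t m"]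
        right[where m=m and z="s (\<phi> n)"] by linarith
    then show "\<exists>N. \<forall>n\<ge>N. \<forall>m\<ge>N. M \<le> gromov_product x (t n) (t m)" by blast
  qed
  moreover have "equiv_infty x s0 t"
    unfolding equiv_infty_def
  proof
    fix M
    obtain N where N: "\<forall>n\<ge>N. \<forall>m\<ge>N. gromov_product x (s0 n) (s m) \<ge> M + C"
      using es unfolding equiv_infty_def by blast
    have "gromov_product x (s0 n) (t m) \<ge> M" if "n \<ge> N" "m \<ge> N" for n m
      using N[rule_format, OF that(1) \<phi>_ge[OF that(2)]] right[where m=m and z="s0 n"] by linarith
    then show "\<exists>N. \<forall>n\<ge>N. \<forall>m\<ge>N. M \<le> gromov_product x (s0 n) (t m)" by blast
  qed
  ultimately show ?thesis using xi0 by blast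
qed

lemma gromov_boundary_mem_equiv_infty:
  assumes H: "gromov_hyperbolic TYPE('a::metric_space) \<delta>"
    and xi: "\<xi> \<in> gromov_boundary (x::'a)" and s: "s \<in> \<xi>"
    and "conv_infty x t" and st: "equiv_infty x s t"
  shows "t \<in> \<xi>"
proof -
  obtain s0 where xi0: "\<xi> = {t. conv_infty x t \<and> equiv_infty x s0 t}"
    using xi unfolding gromov_boundary_def by blast
  have es: "equiv_infty x s0 s" using s xi0 by auto
  have "equiv_infty x s0 t"
    unfolding equiv_infty_def
  proof
    fix M
    obtain N1 where N1: "\<forall>n\<ge>N1. \<forall>m\<ge>N1. gromov_product x (s0 n) (s m) \<ge> M + \<delta>"
      using es unfolding equiv_infty_def by blast
    obtain N2 where N2: "\<forall>k\<ge>N2. \<forall>m\<ge>N2. gromov_product x (s k) (t m) \<ge> M + \<delta>"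
      using st unfolding equiv_infty_def by blast
    define N where "N = max N1 N2"
    have "gromov_product x (s0 n) (t m) \<ge> M" if "n \<ge> N" "m \<ge> N" for n m
    proof -
      have "gromov_product x (s0 n) (s N) \<ge> M + \<delta>" "gromov_product x (s N) (t m) \<ge> M + \<delta>"
        using N1 N2 that unfolding N_def by simp_all
      then show ?thesis using gromov_hyperbolicD[OF H, of x "s0 n" "s N" "t m"] by linarith
    qed
    then show "\<exists>N. \<forall>n\<ge>N. \<forall>m\<ge>N. M \<le> gromov_product x (s0 n) (t m)" by blast
  qed
  then show ?thesis using xi0 assms(4) by blast
qed

lemma geodesic_line_reflect: "geodesic_line L \<Longrightarrow> geodesic_line (\<lambda>t. L (- t))"
  unfolding geodesic_line_def by (simp add: abs_minus_commute)

lemma geodesic_line_conv_infty: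
  assumes "geodesic_line L"
  shows "conv_infty x (\<lambda>n. L (real n))"
  unfolding conv_infty_def
proof
  fix M :: real
  have d: "dist (L s) (L t) = \<bar>s - t\<bar>" for s t
    using assms unfolding geodesic_line_def by blast
  have far: "dist x (L (real n)) \<ge> real n - dist x (L 0)" for n
    using dist_triangle[of "L 0" "L (real n)" x] d[of 0 "real n"] by (simp add: dist_commute)
  have gp: "gromov_product x (L (real n)) (L (real m)) \<ge> min (real n) (real m) - dist x (L 0)" for n m
    using far[of n] far[of m] d[of "real n" "real m"]
    unfolding gromov_product_def by (simp add: abs_if min_def split: if_splits)
  obtain N :: nat where N: "real N \<ge> M + dist x (L 0)"
    using real_arch_simple by blast
  have "M \<le> gromov_product x (L (real n)) (L (real m))" if "n \<ge> N" "m \<ge> N" for n m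
  proof -
    have "real N \<le> min (real n) (real m)" using that by simp
    then show ?thesis using gp[of n m] N by linarith
  qed
  then show "\<exists>N. \<forall>n\<ge>N. \<forall>m\<ge>N. M \<le> gromov_product x (L (real n)) (L (real m))"
    by (intro exI[of _ N]) simp
qed

lemma geodesic_line_shift_subseq_mem:
  assumes L: "geodesic_line \<sigma>" and "\<xi> \<in> gromov_boundary x"
    and "(\<lambda>n. \<sigma> (e * real n)) \<in> \<xi>" and "strict_mono \<phi>"
  shows "(\<lambda>k. \<sigma> (t + e * real (\<phi> k))) \<in> \<xi>"
proof (rule gromov_boundary_mem_close_subseq[OF assms(2-4)])
  show "dist (\<sigma> (t + e * real (\<phi> k))) (\<sigma> (e * real (\<phi> k))) \<le> \<bar>t\<bar>" for k
    using L unfolding geodesic_line_def by simp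
qed

section \<open>Geodesic lines as limits of geodesic segments\<close>

lemma diagonal_convergent_subseq:
  fixes f :: "nat \<Rightarrow> nat \<Rightarrow> 'a::metric_space"
  assumes K: "\<And>i. compact (K i)" and f: "\<And>i k. f i k \<in> K i"
  obtains \<phi> where "strict_mono \<phi>" "\<And>i. convergent (\<lambda>k. f i (\<phi> k))"
proof -
  interpret S: subseqs "\<lambda>i s. convergent (\<lambda>k. f i (s k))"
  proof
    fix i and s :: "nat \<Rightarrow> nat"
    obtain l r where "strict_mono (r :: nat \<Rightarrow> nat)" "((\<lambda>k. f i (s k)) \<circ> r) \<longlonglongrightarrow> l"
      using compact_imp_seq_compact[OF K[of i]] f unfolding seq_compact_def by metis
    then show "\<exists>r'. strict_mono r' \<and> convergent (\<lambda>k. f i ((s \<circ> r') k))"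
      unfolding convergent_def by (auto simp: o_def)
  qed
  have "convergent (\<lambda>k. f i (S.diagseq k))" for i
  proof -
    have "convergent (\<lambda>k. f i ((S.diagseq \<circ> (+) (Suc i)) k))"
    proof (rule S.diagseq_holds)
      fix r s i assume "strict_mono (r :: nat \<Rightarrow> nat)" "convergent (\<lambda>k. f i (s k))"
      then show "convergent (\<lambda>k. f i ((s \<circ> r) k))"
        using convergent_subseq_convergent[of "\<lambda>k. f i (s k)" r] by (simp add: o_def)
    qed
    then obtain l where "(\<lambda>k. f i (S.diagseq (k + Suc i))) \<longlonglongrightarrow> l"
      unfolding convergent_def by (auto simp: o_def add.commute)
    then have "(\<lambda>k. f i (S.diagseq k)) \<longlonglongrightarrow> l" by (rule LIMSEQ_offset)
    then show ?thesis unfolding convergent_def by blast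
  qed
  then show thesis using that S.subseq_diagseq by blast
qed

lemma equilipschitz_Cauchy_of_Rats:
  fixes f :: "nat \<Rightarrow> real \<Rightarrow> 'a::metric_space"
  assumes lip: "\<And>n s t. dist (f n s) (f n t) \<le> \<bar>s - t\<bar>"
    and rat: "\<And>q. q \<in> \<rat> \<Longrightarrow> Cauchy (\<lambda>n. f n q)"
  shows "Cauchy (\<lambda>n. f n t)"
  unfolding Cauchy_def
proof (intro allI impI)
  fix e :: real assume e: "e > 0"
  obtain q where q: "q \<in> \<rat>" "t < q" "q < t + e / 3"
    using Rats_dense_in_real[of t "t + e / 3"] e by auto
  obtain M where M: "\<forall>i\<ge>M. \<forall>j\<ge>M. dist (f i q) (f j q) < e / 3"
    using rat[OF q(1)] e unfolding Cauchy_def by (meson divide_pos_pos zero_less_numeral)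
  have "dist (f i t) (f j t) < e" if "i \<ge> M" "j \<ge> M" for i j
  proof -
    have "dist (f i t) (f j t) \<le> dist (f i t) (f i q) + dist (f i q) (f j q) + dist (f j q) (f j t)"
      using dist_triangle[of "f i t" "f j t" "f i q"] dist_triangle[of "f i q" "f j t" "f j q"] by simp
    moreover have "dist (f i t) (f i q) \<le> \<bar>t - q\<bar>" "dist (f j q) (f j t) \<le> \<bar>t - q\<bar>"
      using lip[of i t q] lip[of j q t] by (simp_all add: abs_minus_commute)
    ultimately show ?thesis using M that q(2,3) by fastforce
  qed
  then show "\<exists>M. \<forall>m\<ge>M. \<forall>n\<ge>M. dist (f m t) (f n t) < e" by blast
qed

lemma lipschitz_maps_pointwise_convergent_subseq:
  fixes c :: "nat \<Rightarrow> real \<Rightarrow> 'a::metric_space"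
  assumes P: "proper_space_pred TYPE('a)"
    and lip: "\<And>n s t. dist (c n s) (c n t) \<le> \<bar>s - t\<bar>" and bdd: "\<And>n. dist x (c n 0) \<le> C"
  obtains \<phi> L where "strict_mono \<phi>" "\<And>t. (\<lambda>k. c (\<phi> k) t) \<longlonglongrightarrow> L t"
proof -
  have comp: "compact (cball x R)" for R using P unfolding proper_space_pred_def by blast
  have ball: "c n t \<in> cball x (C + \<bar>t\<bar>)" for n t
    using dist_triangle[of x "c n t" "c n 0"] bdd[of n] lip[of n 0 t] by (simp add: dist_commute)
  define q :: "nat \<Rightarrow> real" where "q i = of_rat (from_nat i)" for i
  obtain \<phi> where \<phi>: "strict_mono \<phi>" and conv: "\<And>i. convergent (\<lambda>k. c (\<phi> k) (q i))"
    using diagonal_convergent_subseq[of "\<lambda>i. cball x (C + \<bar>q i\<bar>)" "\<lambda>i k. c k (q i)"] comp ball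
    by blast
  have "Cauchy (\<lambda>k. c (\<phi> k) r)" if "r \<in> \<rat>" for r
  proof -
    obtain i where "r = q i"
      using \<open>r \<in> \<rat>\<close> surj_from_nat unfolding q_def Rats_def by (metis rangeE surj_f_inv_f)
    then show ?thesis using conv[of i] by (simp add: convergent_Cauchy)
  qed
  then have cauchy: "Cauchy (\<lambda>k. c (\<phi> k) t)" for t
    by (rule equilipschitz_Cauchy_of_Rats[of "\<lambda>k. c (\<phi> k)", OF lip])
  have "convergent (\<lambda>k. c (\<phi> k) t)" for t
  proof -
    obtain l r where "strict_mono (r :: nat \<Rightarrow> nat)" "((\<lambda>k. c (\<phi> k) t) \<circ> r) \<longlonglongrightarrow> l"
      using compact_imp_seq_compact[OF comp[of "C + \<bar>t\<bar>"]] ball unfolding seq_compact_def by metis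
    then show ?thesis using Cauchy_converges_subseq[OF cauchy] unfolding convergent_def by blast
  qed
  then have "(\<lambda>k. c (\<phi> k) t) \<longlonglongrightarrow> lim (\<lambda>k. c (\<phi> k) t)" for t
    by (simp add: convergent_LIMSEQ_iff)
  then show thesis by (rule that[OF \<phi>])
qed

lemma equiv_infty_limit_of_between:
  assumes H: "gromov_hyperbolic TYPE('a::metric_space) \<delta>" and b: "conv_infty x b"
    and base: "\<And>n. dist (base n) x \<le> C"
    and w: "\<And>m. \<exists>N. \<forall>n\<ge>N. metric_between (base n) (w n m) (b n) \<and> dist (base n) (w n m) = real m"
    and \<phi>: "strict_mono \<phi>" and lim: "\<And>m. (\<lambda>k. w (\<phi> k) m) \<longlonglongrightarrow> (L m :: 'a)"
  shows "equiv_infty x b L"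
  unfolding equiv_infty_def
proof
  fix M
  obtain N1 where N1: "\<forall>n\<ge>N1. \<forall>m\<ge>N1. gromov_product x (b n) (b m) \<ge> M + \<delta>"
    using b unfolding conv_infty_def by blast
  obtain N2 :: nat where N2: "real N2 \<ge> M + \<delta> + C" using real_arch_simple by blast
  have "gromov_product x (b k) (L m) \<ge> M" if km: "k \<ge> max N1 N2" "m \<ge> max N1 N2" for k m
  proof -
    obtain N3 where N3: "\<forall>n\<ge>N3. metric_between (base n) (w n m) (b n) \<and> dist (base n) (w n m) = real m"
      using w by blast
    have "gromov_product x (b k) (w n m) \<ge> M" if n: "n \<ge> max N1 N3" for n
    proof -
      have "gromov_product x (b n) (w n m) \<ge> real m - C"
        using gromov_product_metric_between_ge[OF _ base[of n]] N3 n by fastforce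
      moreover have "gromov_product x (b k) (b n) \<ge> M + \<delta>" using N1 km n by simp
      moreover have "real m \<ge> real N2" using km by simp
      ultimately show ?thesis
        using gromov_hyperbolicD[OF H, of x "b k" "b n" "w n m"] N2 by linarith
    qed
    then have ev: "eventually (\<lambda>j. gromov_product x (b k) (w (\<phi> j) m) \<ge> M) sequentially"
      unfolding eventually_sequentially using seq_suble[OF \<phi>] le_trans by blast
    have "(\<lambda>j. gromov_product x (b k) (w (\<phi> j) m)) \<longlonglongrightarrow> gromov_product x (b k) (L m)"
      unfolding gromov_product_def by (intro tendsto_intros lim) simp
    then show ?thesis using ev by (rule tendsto_lowerbound) simp
  qed
  then show "\<exists>N. \<forall>n\<ge>N. \<forall>m\<ge>N. M \<le> gromov_product x (b n) (L m)"
    by (intro exI[of _ "max N1 N2"]) simp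
qed

definition clip_segment :: "(real \<Rightarrow> 'a) \<Rightarrow> real \<Rightarrow> real \<Rightarrow> real \<Rightarrow> 'a" where
  "clip_segment \<gamma> l u t = \<gamma> (max 0 (min l (u + t)))"

lemma clip_segment_lipschitz:
  assumes "\<And>s r. s \<in> {0..l} \<Longrightarrow> r \<in> {0..l} \<Longrightarrow> dist (\<gamma> s) (\<gamma> r) = \<bar>s - r\<bar>" "u \<in> {0..l}"
  shows "dist (clip_segment \<gamma> l u s) (clip_segment \<gamma> l u t) \<le> \<bar>s - t\<bar>"
proof -
  have "dist (clip_segment \<gamma> l u s) (clip_segment \<gamma> l u t)
      = \<bar>max 0 (min l (u + s)) - max 0 (min l (u + t))\<bar>"
    unfolding clip_segment_def using assms by (intro assms(1)) auto
  also have "\<dots> \<le> \<bar>s - t\<bar>" by (auto simp: max_def min_def abs_if)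
  finally show ?thesis .
qed

lemma clip_segment_eq:
  assumes "\<bar>t\<bar> \<le> u" "\<bar>t\<bar> \<le> l - u"
  shows "clip_segment \<gamma> l u t = \<gamma> (u + t)"
proof -
  have "max 0 (min l (u + t)) = u + t" using assms by (auto simp: abs_le_iff)
  then show ?thesis unfolding clip_segment_def by simp
qed

lemma geodesic_line_of_eventually_isometric:
  assumes lim: "\<And>t. (\<lambda>k. c k t) \<longlonglongrightarrow> L t"
    and iso: "\<And>s t. eventually (\<lambda>k. dist (c k s) (c k t) = \<bar>s - t\<bar>) sequentially"
  shows "geodesic_line L"
  unfolding geodesic_line_def
proof (intro allI)
  fix s t
  have "(\<lambda>k. dist (c k s) (c k t)) \<longlonglongrightarrow> \<bar>s - t\<bar>"
    using iso[of s t] by (rule tendsto_eventually)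
  moreover have "(\<lambda>k. dist (c k s) (c k t)) \<longlonglongrightarrow> dist (L s) (L t)"
    by (intro tendsto_intros lim)
  ultimately show "dist (L s) (L t) = \<bar>s - t\<bar>" by (rule LIMSEQ_unique[rotated])
qed

lemma lipschitz_limit_dist_le:
  fixes c :: "nat \<Rightarrow> real \<Rightarrow> 'a::metric_space"
  assumes lip: "\<And>k s t. dist (c k s) (c k t) \<le> \<bar>s - t\<bar>" and lim: "\<And>t. (\<lambda>k. c k t) \<longlonglongrightarrow> L t"
    and w: "\<And>k. \<bar>w k\<bar> \<le> B" "\<And>k. dist (c k (w k)) p \<le> C"
  obtains t where "dist (L t) p \<le> C"
proof -
  have "\<forall>k. w k \<in> cball 0 B" using w(1) by simp
  then obtain t \<psi> where \<psi>: "strict_mono (\<psi> :: nat \<Rightarrow> nat)" "(w \<circ> \<psi>) \<longlonglongrightarrow> t"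
    using seq_compactE[OF compact_imp_seq_compact[OF compact_cball]] by metis
  have le: "dist (c (\<psi> k) t) p \<le> \<bar>t - w (\<psi> k)\<bar> + C" for k
    using dist_triangle[of "c (\<psi> k) t" p "c (\<psi> k) (w (\<psi> k))"] lip[of "\<psi> k" t "w (\<psi> k)"] w(2)[of "\<psi> k"]
    by simp
  have "(\<lambda>k. dist (c (\<psi> k) t) p) \<longlonglongrightarrow> dist (L t) p"
    using LIMSEQ_subseq_LIMSEQ[OF lim \<psi>(1)] by (intro tendsto_intros) (simp add: o_def)
  moreover have "(\<lambda>k. \<bar>t - w (\<psi> k)\<bar> + C) \<longlonglongrightarrow> \<bar>t - t\<bar> + C"
    using \<psi>(2) by (intro tendsto_intros) (simp add: o_def)
  ultimately have "dist (L t) p \<le> \<bar>t - t\<bar> + C" using le by (intro LIMSEQ_le) auto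
  then show thesis using that by simp
qed

lemma segments_center_far_from_ends:
  assumes seg: "\<And>n. \<gamma>s n 0 = a n" "\<And>n. \<gamma>s n (ell n) = b n"
      "\<And>n s r. s \<in> {0..ell n} \<Longrightarrow> r \<in> {0..ell n} \<Longrightarrow> dist (\<gamma>s n s) (\<gamma>s n r) = \<bar>s - r\<bar>"
    and u: "\<And>n. u n \<in> {0..ell n}" "\<And>n. dist (\<gamma>s n (u n)) x \<le> C"
    and a: "conv_infty x a" and b: "conv_infty x b"
  shows "\<exists>N. \<forall>n\<ge>N. T \<le> u n \<and> T \<le> ell n - u n"
proof -
  obtain N1 where N1: "\<And>n. n \<ge> N1 \<Longrightarrow> dist x (a n) \<ge> T + C"
    using conv_infty_dist_unbounded[OF a] by blast
  obtain N2 where N2: "\<And>n. n \<ge> N2 \<Longrightarrow> dist x (b n) \<ge> T + C"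
    using conv_infty_dist_unbounded[OF b] by blast
  have "u n = dist (a n) (\<gamma>s n (u n))" "ell n - u n = dist (\<gamma>s n (u n)) (b n)" for n
    using seg(3)[of 0 n "u n"] seg(3)[of "u n" n "ell n"] seg(1,2) u(1)[of n] by auto
  then have "u n \<ge> dist x (a n) - C" "ell n - u n \<ge> dist x (b n) - C" for n
    using dist_triangle[of x "a n" "\<gamma>s n (u n)"] dist_triangle[of x "b n" "\<gamma>s n (u n)"] u(2)[of n]
    by (simp_all add: dist_commute)
  then show ?thesis using N1 N2 by (intro exI[of _ "max N1 N2"]) (smt (verit) max.bounded_iff)
qed

text \<open>Each segment is reparametrized around its point \<open>u n\<close> near \<open>x\<close> and clipped to a
  1-Lipschitz map of the whole line; a pointwise limit is then a geodesic line.\<close>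

lemma geodesic_line_limit_of_segments:
  fixes x p :: "'a::metric_space"
  assumes H: "gromov_hyperbolic TYPE('a) \<delta>" and P: "proper_space_pred TYPE('a)"
    and seg: "\<And>n. \<gamma>s n 0 = a n" "\<And>n. \<gamma>s n (ell n) = b n"
      "\<And>n s r. s \<in> {0..ell n} \<Longrightarrow> r \<in> {0..ell n} \<Longrightarrow> dist (\<gamma>s n s) (\<gamma>s n r) = \<bar>s - r\<bar>"
    and u: "\<And>n. u n \<in> {0..ell n}" "\<And>n. dist (\<gamma>s n (u n)) x \<le> C"
    and v: "\<And>n. v n \<in> {0..ell n}" "\<And>n. dist (\<gamma>s n (v n)) p \<le> C"
    and a: "conv_infty x a" and b: "conv_infty x b"
  obtains L t where "geodesic_line L" "dist (L t) p \<le> C"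
    "equiv_infty x b (\<lambda>m. L (real m))" "equiv_infty x a (\<lambda>m. L (- real m))"
proof -
  define c where "c n = clip_segment (\<gamma>s n) (ell n) (u n)" for n
  have c_lip: "dist (c n s) (c n t) \<le> \<bar>s - t\<bar>" for n s t
    unfolding c_def using seg(3) u(1) by (rule clip_segment_lipschitz)
  have c_eq: "c n t = \<gamma>s n (u n + t)" if "\<bar>t\<bar> \<le> u n" "\<bar>t\<bar> \<le> ell n - u n" for n t
    unfolding c_def using that by (rule clip_segment_eq)
  have "dist x (c n 0) \<le> C" for n using c_eq[of 0 n] u(1,2)[of n] by (simp add: dist_commute)
  then obtain \<phi> L where \<phi>: "strict_mono \<phi>" and lim: "\<And>t. (\<lambda>k. c (\<phi> k) t) \<longlonglongrightarrow> L t"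
    using lipschitz_maps_pointwise_convergent_subseq[where c=c, OF P c_lip] by blast
  note far = segments_center_far_from_ends[OF seg u a b]
  have "geodesic_line L"
  proof (rule geodesic_line_of_eventually_isometric[OF lim])
    fix s t :: real
    obtain N where N: "\<forall>n\<ge>N. \<bar>s\<bar> + \<bar>t\<bar> \<le> u n \<and> \<bar>s\<bar> + \<bar>t\<bar> \<le> ell n - u n" using far by blast
    have "dist (c n s) (c n t) = \<bar>s - t\<bar>" if "n \<ge> N" for n
    proof -
      have w: "\<bar>s\<bar> \<le> u n" "\<bar>s\<bar> \<le> ell n - u n" "\<bar>t\<bar> \<le> u n" "\<bar>t\<bar> \<le> ell n - u n"
        using N that abs_ge_zero[of s] abs_ge_zero[of t] by fastforce+
      then show ?thesis using seg(3) c_eq[OF w(1,2)] c_eq[OF w(3,4)] by (simp add: abs_le_iff)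
    qed
    then show "eventually (\<lambda>k. dist (c (\<phi> k) s) (c (\<phi> k) t) = \<bar>s - t\<bar>) sequentially"
      unfolding eventually_sequentially using seq_suble[OF \<phi>] le_trans by blast
  qed
  moreover obtain t where "dist (L t) p \<le> C"
  proof (rule lipschitz_limit_dist_le[OF c_lip lim, where w="\<lambda>k. v (\<phi> k) - u (\<phi> k)"])
    show "\<bar>v (\<phi> k) - u (\<phi> k)\<bar> \<le> 2 * C + dist x p" for k
      using seg(3)[of "v (\<phi> k)" "\<phi> k" "u (\<phi> k)"] u(1) v(1) u(2)[of "\<phi> k"] v(2)[of "\<phi> k"]
        dist_triangle[of "\<gamma>s (\<phi> k) (v (\<phi> k))" "\<gamma>s (\<phi> k) (u (\<phi> k))" p]
        dist_triangle[of p "\<gamma>s (\<phi> k) (u (\<phi> k))" x] by (simp add: dist_commute)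
    show "dist (c (\<phi> k) (v (\<phi> k) - u (\<phi> k))) p \<le> C" for k
      using v[of "\<phi> k"] u(1)[of "\<phi> k"] unfolding c_def clip_segment_def by simp
  qed (rule that)
  moreover have rays: "metric_between (\<gamma>s n (u n)) (c n (real m)) (b n) \<and> dist (\<gamma>s n (u n)) (c n (real m)) = real m"
    "metric_between (\<gamma>s n (u n)) (c n (- real m)) (a n) \<and> dist (\<gamma>s n (u n)) (c n (- real m)) = real m"
    if "real m \<le> u n" "real m \<le> ell n - u n" for n m
    using that c_eq[of "real m" n] c_eq[of "- real m" n] seg(1,2) u(1)[of n]
      seg(3)[of "u n" n "u n + real m"] seg(3)[of "u n + real m" n "ell n"] seg(3)[of "u n" n "ell n"]
      seg(3)[of "u n" n "u n - real m"] seg(3)[of 0 n "u n - real m"] seg(3)[of 0 n "u n"]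
    unfolding metric_between_def by (auto simp: dist_commute)
  have ray_b: "\<exists>N. \<forall>n\<ge>N. metric_between (\<gamma>s n (u n)) (c n (real m)) (b n)
      \<and> dist (\<gamma>s n (u n)) (c n (real m)) = real m"
    and ray_a: "\<exists>N. \<forall>n\<ge>N. metric_between (\<gamma>s n (u n)) (c n (- real m)) (a n)
      \<and> dist (\<gamma>s n (u n)) (c n (- real m)) = real m"
    for m using far[of "real m"] rays by blast+
  have "equiv_infty x b (\<lambda>m. L (real m))"
    by (rule equiv_infty_limit_of_between[where base="\<lambda>n. \<gamma>s n (u n)" and w="\<lambda>n m. c n (real m)",
          OF H b u(2) ray_b \<phi> lim])
  moreover have "equiv_infty x a (\<lambda>m. L (- real m))"
    by (rule equiv_infty_limit_of_between[where base="\<lambda>n. \<gamma>s n (u n)" and w="\<lambda>n m. c n (- real m)",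
          OF H a u(2) ray_a \<phi> lim])
  ultimately show thesis using that by blast
qed

section \<open>Quasiconvexity of the hull of a set of boundary points\<close>

lemma QC_HullE:
  assumes "y \<in> QC_Hull x C"
  obtains \<sigma> t \<xi> \<eta> where "geodesic_line \<sigma>" "y = \<sigma> t" "\<xi> \<in> C" "(\<lambda>n. \<sigma> (real n)) \<in> \<xi>"
    "\<eta> \<in> C" "(\<lambda>n. \<sigma> (- real n)) \<in> \<eta>"
  using assms unfolding QC_Hull_def by blast

lemma QC_HullI:
  assumes "geodesic_line L" "\<xi> \<in> C" "(\<lambda>n. L (real n)) \<in> \<xi>" "\<eta> \<in> C" "(\<lambda>n. L (- real n)) \<in> \<eta>"
  shows "L t \<in> QC_Hull x C"
  using assms unfolding QC_Hull_def by blast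

lemma QC_Hull_rays:
  assumes "y \<in> QC_Hull x C"
  obtains \<sigma> t where "geodesic_line \<sigma>" "y = \<sigma> t"
    "\<And>e. \<bar>e\<bar> = 1 \<Longrightarrow> \<exists>\<xi>\<in>C. (\<lambda>n. \<sigma> (e * real n)) \<in> \<xi>"
proof -
  obtain \<sigma> t \<xi> \<eta> where *: "geodesic_line \<sigma>" "y = \<sigma> t" "\<xi> \<in> C" "(\<lambda>n. \<sigma> (real n)) \<in> \<xi>"
    "\<eta> \<in> C" "(\<lambda>n. \<sigma> (- real n)) \<in> \<eta>" by (rule QC_HullE[OF assms])
  have "\<exists>\<xi>\<in>C. (\<lambda>n. \<sigma> (e * real n)) \<in> \<xi>" if "\<bar>e\<bar> = 1" for e
    using that *(3-6) by (cases "e = 1") (auto simp: abs_if split: if_splits)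
  then show thesis using that *(1,2) by blast
qed

lemma strict_mono_subseq_disj:
  assumes "\<And>n. P n \<or> Q n"
  obtains (P) \<phi> :: "nat \<Rightarrow> nat" where "strict_mono \<phi>" "\<And>k. P (\<phi> k)"
    | (Q) \<phi> :: "nat \<Rightarrow> nat" where "strict_mono \<phi>" "\<And>k. Q (\<phi> k)"
proof (cases "finite {n. P n}")
  case False
  then obtain \<phi> :: "nat \<Rightarrow> nat" where "strict_mono \<phi>" "\<forall>n. \<phi> n \<in> {n. P n}"
    using infinite_enumerate by blast
  then show thesis using P by auto
next
  case True
  then obtain N where "\<forall>n\<in>{n. P n}. n < N" using finite_nat_set_iff_bounded by blast
  then have "Q (k + N)" for k using assms by (metis le_add2 mem_Collect_eq not_le)
  moreover have "strict_mono (\<lambda>k. k + N)" by (simp add: strict_mono_def)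
  ultimately show thesis using Q by blast
qed

lemma geodesic_line_thin_direction:
  fixes \<sigma> :: "real \<Rightarrow> 'a::metric_space" and f :: "nat \<Rightarrow> nat" and z :: "nat \<Rightarrow> 'a"
  assumes H: "gromov_hyperbolic TYPE('a) \<delta>" and L: "geodesic_line \<sigma>" and y: "y = \<sigma> t"
  obtains e and \<phi> :: "nat \<Rightarrow> nat" where "\<bar>e\<bar> = 1" "strict_mono \<phi>"
    "\<And>k. gromov_product y (\<sigma> (t + e * real (f (\<phi> k)))) (z (\<phi> k)) \<le> \<delta>"
proof -
  have zero: "gromov_product (\<sigma> t) (\<sigma> (t + real m)) (\<sigma> (t - real m)) = 0" for m
    using L unfolding geodesic_line_def gromov_product_def by simp
  define thin where "thin e n \<longleftrightarrow> gromov_product y (\<sigma> (t + e * real (f n))) (z n) \<le> \<delta>" for e n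
  have disj: "thin 1 n \<or> thin (-1) n" for n
    using gromov_hyperbolic_zero_product[OF H zero[of "f n"], of "z n"] y unfolding thin_def by simp
  from disj show thesis
  proof (cases rule: strict_mono_subseq_disj[of "thin 1" "thin (-1)"])
    case (P \<phi>)
    show thesis by (rule that[of 1 \<phi>]) (use P in \<open>simp_all add: thin_def\<close>)
  next
    case (Q \<phi>)
    show thesis by (rule that[of "-1" \<phi>]) (use Q in \<open>simp_all add: thin_def\<close>)
  qed
qed

text \<open>Following both geodesic lines through \<open>y1\<close> and \<open>y2\<close> in a suitable direction gives
  boundary sequences \<open>a\<close>, \<open>b\<close> such that \<open>y1, y2, b, a\<close> is a thin quadrilateral.\<close>

lemma QC_Hull_thin_quadrilateral:
  fixes x y1 y2 :: "'a::metric_space"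
  assumes H: "gromov_hyperbolic TYPE('a) \<delta>" and Cb: "C \<subseteq> gromov_boundary x"
    and y1: "y1 \<in> QC_Hull x C" and y2: "y2 \<in> QC_Hull x C"
  obtains a b \<xi>a \<xi>b where "\<xi>a \<in> C" "a \<in> \<xi>a" "\<xi>b \<in> C" "b \<in> \<xi>b"
    "\<And>j. gromov_product y1 (a j) y2 \<le> \<delta>" "\<And>j. gromov_product y2 (a j) (b j) \<le> \<delta>"
proof -
  obtain \<sigma> t1 where \<sigma>: "geodesic_line \<sigma>" "y1 = \<sigma> t1"
    "\<And>e. \<bar>e\<bar> = 1 \<Longrightarrow> \<exists>\<xi>\<in>C. (\<lambda>n. \<sigma> (e * real n)) \<in> \<xi>"
    by (metis QC_Hull_rays[OF y1])
  obtain \<gamma> t2 where \<gamma>: "geodesic_line \<gamma>" "y2 = \<gamma> t2"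
    "\<And>e. \<bar>e\<bar> = 1 \<Longrightarrow> \<exists>\<xi>\<in>C. (\<lambda>n. \<gamma> (e * real n)) \<in> \<xi>"
    by (metis QC_Hull_rays[OF y2])
  obtain e1 and \<phi>1 :: "nat \<Rightarrow> nat" where e1: "\<bar>e1\<bar> = 1" "strict_mono \<phi>1"
    "\<And>k. gromov_product y1 (\<sigma> (t1 + e1 * real (\<phi>1 k))) y2 \<le> \<delta>"
    by (rule geodesic_line_thin_direction[OF H \<sigma>(1,2), of "\<lambda>n. n" "\<lambda>_. y2"]) (rule that)
  obtain e2 and \<phi>2 :: "nat \<Rightarrow> nat" where e2: "\<bar>e2\<bar> = 1" "strict_mono \<phi>2"
    "\<And>k. gromov_product y2 (\<gamma> (t2 + e2 * real (\<phi>1 (\<phi>2 k)))) (\<sigma> (t1 + e1 * real (\<phi>1 (\<phi>2 k)))) \<le> \<delta>"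
    by (rule geodesic_line_thin_direction[OF H \<gamma>(1,2), of \<phi>1 "\<lambda>k. \<sigma> (t1 + e1 * real (\<phi>1 k))"]) (rule that)
  define \<psi> where "\<psi> = \<phi>1 \<circ> \<phi>2"
  have \<psi>: "strict_mono \<psi>" unfolding \<psi>_def using e1(2) e2(2) by (rule strict_mono_o)
  obtain \<xi>a where \<xi>a: "\<xi>a \<in> C" "(\<lambda>n. \<sigma> (e1 * real n)) \<in> \<xi>a" using \<sigma>(3) e1(1) by blast
  obtain \<xi>b where \<xi>b: "\<xi>b \<in> C" "(\<lambda>n. \<gamma> (e2 * real n)) \<in> \<xi>b" using \<gamma>(3) e2(1) by blast
  show thesis
  proof (rule that[OF \<xi>a(1) _ \<xi>b(1)])
    show "(\<lambda>j. \<sigma> (t1 + e1 * real (\<psi> j))) \<in> \<xi>a" "(\<lambda>j. \<gamma> (t2 + e2 * real (\<psi> j))) \<in> \<xi>b"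
      using geodesic_line_shift_subseq_mem[OF \<sigma>(1) _ \<xi>a(2) \<psi>] \<xi>a(1)
        geodesic_line_shift_subseq_mem[OF \<gamma>(1) _ \<xi>b(2) \<psi>] \<xi>b(1) Cb by blast+
    show "gromov_product y1 (\<sigma> (t1 + e1 * real (\<psi> j))) y2 \<le> \<delta>"
      "gromov_product y2 (\<sigma> (t1 + e1 * real (\<psi> j))) (\<gamma> (t2 + e2 * real (\<psi> j))) \<le> \<delta>" for j
      using e1(3)[of "\<phi>2 j"] e2(3)[of j] unfolding \<psi>_def by (simp_all add: gromov_product_commute)
  qed
qed

lemma QC_Hull_quasiconvex:
  fixes x :: "'a::metric_space"
  assumes H: "gromov_hyperbolic TYPE('a) \<delta>" and G: "geodesic_space TYPE('a)"
    and P: "proper_space_pred TYPE('a)" and Cb: "C \<subseteq> gromov_boundary x"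
    and y1: "y1 \<in> QC_Hull x C" and y2: "y2 \<in> QC_Hull x C" and p: "metric_between y1 p y2"
  obtains z where "z \<in> QC_Hull x C" "dist z p \<le> 16 * \<delta>"
proof -
  obtain a b \<xi>a \<xi>b where \<xi>: "\<xi>a \<in> C" "a \<in> \<xi>a" "\<xi>b \<in> C" "b \<in> \<xi>b"
    and thin: "\<And>j. gromov_product y1 (a j) y2 \<le> \<delta>" "\<And>j. gromov_product y2 (a j) (b j) \<le> \<delta>"
    by (rule QC_Hull_thin_quadrilateral[OF H Cb y1 y2]) (rule that)
  have "\<forall>j. \<exists>g. g 0 = a j \<and> g (dist (a j) (b j)) = b j \<and>
      (\<forall>s\<in>{0..dist (a j) (b j)}. \<forall>r\<in>{0..dist (a j) (b j)}. dist (g s) (g r) = \<bar>s - r\<bar>)"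
    using G unfolding geodesic_space_def by blast
  then obtain \<gamma>s where \<gamma>s: "\<And>j. \<gamma>s j 0 = a j" "\<And>j. \<gamma>s j (dist (a j) (b j)) = b j"
    "\<And>j s r. s \<in> {0..dist (a j) (b j)} \<Longrightarrow> r \<in> {0..dist (a j) (b j)} \<Longrightarrow>
      dist (\<gamma>s j s) (\<gamma>s j r) = \<bar>s - r\<bar>"
    by metis
  have near: "\<exists>u\<in>{0..dist (a j) (b j)}. dist (\<gamma>s j u) z \<le> 16 * \<delta>"
    if z: "metric_between y1 z y2" for j z
  proof -
    obtain q where q: "metric_between (a j) q (b j)" "dist z q \<le> 12 * \<delta>"
      by (rule hyperbolic_quadrilateral[OF H G thin(1) thin(2) z])
    then show ?thesis
      using hyperbolic_between_near_segment[OF H q(1) \<gamma>s(1,2) \<gamma>s(3)] dist_triangle[of _ z q]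
      by (smt (verit, best) atLeastAtMost_iff dist_commute zero_le_dist)
  qed
  obtain u where u: "\<And>j. u j \<in> {0..dist (a j) (b j)}" "\<And>j. dist (\<gamma>s j (u j)) y1 \<le> 16 * \<delta>"
    using near[OF metric_between_refl] by metis
  obtain v where v: "\<And>j. v j \<in> {0..dist (a j) (b j)}" "\<And>j. dist (\<gamma>s j (v j)) p \<le> 16 * \<delta>"
    using near[OF p] by metis
  have ab: "conv_infty y1 a" "conv_infty y1 b"
    using gromov_boundary_conv_infty conv_infty_base_change \<xi> Cb by blast+
  obtain L t where L: "geodesic_line L" "dist (L t) p \<le> 16 * \<delta>"
    "equiv_infty y1 b (\<lambda>m. L (real m))" "equiv_infty y1 a (\<lambda>m. L (- real m))"
    using geodesic_line_limit_of_segments[where ell="\<lambda>j. dist (a j) (b j)", OF H P \<gamma>s u v ab] by blast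
  have "(\<lambda>m. L (real m)) \<in> \<xi>b"
    using gromov_boundary_mem_equiv_infty[OF H _ \<xi>(4) geodesic_line_conv_infty[OF L(1)]
        equiv_infty_base_change[OF L(3)]] \<xi>(3) Cb by blast
  moreover have "(\<lambda>m. L (- real m)) \<in> \<xi>a"
    using gromov_boundary_mem_equiv_infty[OF H _ \<xi>(2) geodesic_line_conv_infty[OF geodesic_line_reflect[OF L(1)]]
        equiv_infty_base_change[OF L(4)]] \<xi>(1) Cb by blast
  ultimately show thesis using that QC_HullI[OF L(1) \<xi>(3) _ \<xi>(1)] L(2) by blast
qed

section \<open>Isometry groups\<close>

lemma isometry_dist: "isometry g \<Longrightarrow> dist (g a) (g b) = dist a b"
  unfolding isometry_def by blast

lemma isometry_inv_right: "isometry g \<Longrightarrow> g (inv g y) = y"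
  unfolding isometry_def by (meson bij_is_surj surj_f_inv_f)

lemma isometry_inv_left: "isometry g \<Longrightarrow> inv g (g y) = y"
  unfolding isometry_def by (meson bij_is_inj inv_f_f)

lemma gromov_product_isometry:
  "isometry g \<Longrightarrow> gromov_product x (g a) (g b) = gromov_product (inv g x) a b"
  unfolding gromov_product_def
  by (metis isometry_dist isometry_inv_right)

lemma conv_infty_isometry: "isometry g \<Longrightarrow> conv_infty x s \<Longrightarrow> conv_infty x (g \<circ> s)"
  using conv_infty_base_change[of x s "inv g x"] unfolding conv_infty_def
  by (simp add: gromov_product_isometry)

lemma equiv_infty_isometry:
  "isometry g \<Longrightarrow> equiv_infty x s t \<Longrightarrow> equiv_infty x (g \<circ> s) (g \<circ> t)"
  using equiv_infty_base_change[of x s t "inv g x"] unfolding equiv_infty_def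
  by (simp add: gromov_product_isometry)

lemma isom_group_isometry: "isom_group \<Gamma> \<Longrightarrow> g \<in> \<Gamma> \<Longrightarrow> isometry g"
  unfolding isom_group_def by blast

lemma isom_group_inv_comp_mem: "isom_group \<Gamma> \<Longrightarrow> h \<in> \<Gamma> \<Longrightarrow> g \<in> \<Gamma> \<Longrightarrow> inv h \<circ> g \<in> \<Gamma>"
  unfolding isom_group_def by blast

lemma isom_group_comp_inv_comp: "isom_group \<Gamma> \<Longrightarrow> h \<in> \<Gamma> \<Longrightarrow> h \<circ> (inv h \<circ> g) = g"
  by (auto simp: fun_eq_iff isometry_inv_right dest: isom_group_isometry)

lemma isom_group_inv_comp_dist:
  "isom_group \<Gamma> \<Longrightarrow> h \<in> \<Gamma> \<Longrightarrow> dist ((inv h \<circ> g) x) x = dist (g x) (h x)"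
  by (metis comp_apply isom_group_isometry isometry_dist isometry_inv_right)

lemma limit_set_isometry_image:
  assumes \<Gamma>: "isom_group \<Gamma>" and g: "g \<in> \<Gamma>" and \<xi>: "\<xi> \<in> limit_set \<Gamma> x"
  obtains \<eta> where "\<eta> \<in> limit_set \<Gamma> x" "\<And>t. t \<in> \<xi> \<Longrightarrow> g \<circ> t \<in> \<eta>"
proof -
  have gi: "isometry g" using isom_group_isometry[OF \<Gamma> g] .
  obtain s0 where s0: "\<xi> = {t. conv_infty x t \<and> equiv_infty x s0 t}" "conv_infty x s0"
    using \<xi> unfolding limit_set_def gromov_boundary_def by blast
  obtain s where s: "s \<in> \<xi>" "\<forall>n. s n \<in> (\<lambda>g. g x) ` \<Gamma>"
    using \<xi> unfolding limit_set_def by blast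
  define \<eta> where "\<eta> = {t. conv_infty x t \<and> equiv_infty x (g \<circ> s0) t}"
  have mem: "g \<circ> t \<in> \<eta>" if "t \<in> \<xi>" for t
    using that s0 conv_infty_isometry[OF gi] equiv_infty_isometry[OF gi] unfolding \<eta>_def by blast
  have "\<eta> \<in> gromov_boundary x"
    unfolding \<eta>_def gromov_boundary_def using conv_infty_isometry[OF gi s0(2)] by blast
  moreover have "(g \<circ> s) n \<in> (\<lambda>g. g x) ` \<Gamma>" for n
  proof -
    obtain h where "h \<in> \<Gamma>" "s n = h x" using s(2) by blast
    moreover have "g \<circ> h \<in> \<Gamma>" using \<Gamma> g \<open>h \<in> \<Gamma>\<close> unfolding isom_group_def by blast
    ultimately show ?thesis by (metis comp_apply image_eqI)
  qed
  ultimately have "\<eta> \<in> limit_set \<Gamma> x" unfolding limit_set_def using mem[OF s(1)] by blast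
  then show thesis using that mem by metis
qed

lemma QC_Hull_isom_group_invariant:
  assumes \<Gamma>: "isom_group \<Gamma>" and g: "g \<in> \<Gamma>" and y: "y \<in> QC_Hull x (limit_set \<Gamma> x)"
  shows "g y \<in> QC_Hull x (limit_set \<Gamma> x)"
proof -
  obtain \<sigma> t \<xi> \<eta> where *: "geodesic_line \<sigma>" "y = \<sigma> t" "\<xi> \<in> limit_set \<Gamma> x"
    "(\<lambda>n. \<sigma> (real n)) \<in> \<xi>" "\<eta> \<in> limit_set \<Gamma> x" "(\<lambda>n. \<sigma> (- real n)) \<in> \<eta>"
    by (rule QC_HullE[OF y])
  obtain \<xi>' where \<xi>': "\<xi>' \<in> limit_set \<Gamma> x" "\<And>t. t \<in> \<xi> \<Longrightarrow> g \<circ> t \<in> \<xi>'"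
    by (rule limit_set_isometry_image[OF \<Gamma> g *(3)]) (rule that)
  obtain \<eta>' where \<eta>': "\<eta>' \<in> limit_set \<Gamma> x" "\<And>t. t \<in> \<eta> \<Longrightarrow> g \<circ> t \<in> \<eta>'"
    by (rule limit_set_isometry_image[OF \<Gamma> g *(5)]) (rule that)
  have "geodesic_line (g \<circ> \<sigma>)"
    using *(1) isometry_dist[OF isom_group_isometry[OF \<Gamma> g]] unfolding geodesic_line_def by simp
  moreover have "(\<lambda>n. (g \<circ> \<sigma>) (real n)) \<in> \<xi>'" "(\<lambda>n. (g \<circ> \<sigma>) (- real n)) \<in> \<eta>'"
    using \<xi>'(2)[OF *(4)] \<eta>'(2)[OF *(6)] by (simp_all add: o_def)
  ultimately show ?thesis using QC_HullI[OF _ \<xi>'(1) _ \<eta>'(1), of "g \<circ> \<sigma>" t] *(2) by simp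
qed

text \<open>A torsion-free discrete group acts freely: the powers of an element fixing \<open>x\<close> lie in
  a finite set, so some positive power is the identity.\<close>

lemma torsion_free_fix_eq_id:
  assumes \<Gamma>: "isom_group \<Gamma>" and "discrete_group \<Gamma>" and "torsion_free \<Gamma>"
    and g: "g \<in> \<Gamma>" and fixed: "g x = x"
  shows "g = id"
proof -
  have pow: "g ^^ n \<in> \<Gamma> \<and> (g ^^ n) x = x" for n
  proof (induction n)
    case 0 then show ?case using \<Gamma> unfolding isom_group_def by (simp add: id_def)
  next
    case (Suc n)
    then have "g \<circ> g ^^ n \<in> \<Gamma>" using \<Gamma> g unfolding isom_group_def by blast
    then show ?case using Suc fixed by (metis comp_apply funpow.simps(2))
  qed
  then have "range (\<lambda>n. g ^^ n) \<subseteq> {h\<in>\<Gamma>. dist (h x) x \<le> 0}" by auto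
  moreover have "finite {h\<in>\<Gamma>. dist (h x) x \<le> 0}"
    using \<open>discrete_group \<Gamma>\<close> unfolding discrete_group_def by blast
  ultimately have "finite (range (\<lambda>n. g ^^ n))" by (rule finite_subset)
  then have "\<not> inj (\<lambda>n::nat. g ^^ n)" using finite_imageD infinite_UNIV_nat by blast
  then obtain i j :: nat where "i \<noteq> j" "g ^^ i = g ^^ j" unfolding inj_def by blast
  then obtain a b :: nat where ab: "a < b" "g ^^ a = g ^^ b"
    by (cases "i < j") (auto dest: not_less_iff_gr_or_eq[THEN iffD1])
  have "surj (g ^^ a)" using pow[of a] isom_group_isometry[OF \<Gamma>] unfolding isometry_def by (blast dest: bij_is_surj)
  moreover have "g ^^ b = g ^^ (b - a) \<circ> g ^^ a" using ab(1) funpow_add[of "b - a" a g] by simp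
  ultimately have "(g ^^ (b - a)) y = y" for y
    using ab(2) by (metis comp_apply surjD)
  then have "g ^^ (b - a) = id" by auto
  moreover have "b - a > 0" using ab(1) by simp
  ultimately show ?thesis using \<open>torsion_free \<Gamma>\<close> g unfolding torsion_free_def by blast
qed

lemma inj_on_orbit:
  assumes \<Gamma>: "isom_group \<Gamma>" and "discrete_group \<Gamma>" and "torsion_free \<Gamma>"
  shows "inj_on (\<lambda>g. g x) \<Gamma>"
proof (rule inj_onI)
  fix g h assume g: "g \<in> \<Gamma>" and h: "h \<in> \<Gamma>" and e: "g x = h x"
  have "(inv h \<circ> g) x = x" using e isometry_inv_left[OF isom_group_isometry[OF \<Gamma> h]] by simp
  then have "inv h \<circ> g = id"
    using torsion_free_fix_eq_id[OF assms isom_group_inv_comp_mem[OF \<Gamma> h g]] by blast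
  then show "g = h" using isom_group_comp_inv_comp[OF \<Gamma> h, of g] by simp
qed

section \<open>Growth rates of submultiplicative functions\<close>

lemma subadditive_iterate:
  fixes g :: "real \<Rightarrow> real"
  assumes sub: "\<And>s t. 0 \<le> s \<Longrightarrow> 0 \<le> t \<Longrightarrow> g (s + t) \<le> g s + g t" and "T0 \<ge> 0" "r \<ge> 0"
  shows "g (real k * T0 + r) \<le> real k * g T0 + g r"
proof (induction k)
  case (Suc k)
  have "g (real (Suc k) * T0 + r) = g (T0 + (real k * T0 + r))" by (simp add: algebra_simps)
  also have "\<dots> \<le> g T0 + g (real k * T0 + r)" using sub assms(2,3) by simp
  also have "\<dots> \<le> real (Suc k) * g T0 + g r" using Suc by (simp add: algebra_simps)
  finally show ?case .
qed simp

lemma subadditive_quotient_le: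
  fixes g :: "real \<Rightarrow> real"
  assumes mono: "\<And>s t. 0 \<le> s \<Longrightarrow> s \<le> t \<Longrightarrow> g s \<le> g t" and nonneg: "\<And>t. 0 \<le> t \<Longrightarrow> 0 \<le> g t"
    and sub: "\<And>s t. 0 \<le> s \<Longrightarrow> 0 \<le> t \<Longrightarrow> g (s + t) \<le> g s + g t"
    and T0: "0 < T0" and T: "0 < T"
  shows "g T / T \<le> g T0 / T0 + g T0 / T"
proof -
  define k where "k = nat \<lfloor>T / T0\<rfloor>"
  have "real k = of_int \<lfloor>T / T0\<rfloor>" unfolding k_def using T T0 by simp
  then have "real k \<le> T / T0" "T / T0 < real k + 1"
    using floor_correct[of "T / T0"] by simp_all
  then have k: "real k * T0 \<le> T" "T - real k * T0 \<le> T0"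
    using T0 by (simp_all add: field_simps)
  have "g T = g (real k * T0 + (T - real k * T0))" by simp
  also have "\<dots> \<le> real k * g T0 + g (T - real k * T0)"
    using sub T0 k by (intro subadditive_iterate) auto
  also have "\<dots> \<le> (real k + 1) * g T0" using mono k by (simp add: algebra_simps)
  also have "\<dots> \<le> (T / T0 + 1) * g T0"
    using nonneg[of T0] T0 \<open>real k \<le> T / T0\<close> by (intro mult_right_mono) auto
  finally have "g T / T \<le> (T / T0 + 1) * g T0 / T" using T by (simp add: divide_right_mono)
  also have "\<dots> = g T0 / T0 + g T0 / T" using T T0 by (simp add: field_simps)
  finally show ?thesis .
qed

lemma subadditive_tendsto_Inf:
  fixes g :: "real \<Rightarrow> real"
  assumes mono: "\<And>s t. 0 \<le> s \<Longrightarrow> s \<le> t \<Longrightarrow> g s \<le> g t" and nonneg: "\<And>t. 0 \<le> t \<Longrightarrow> 0 \<le> g t"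
    and sub: "\<And>s t. 0 \<le> s \<Longrightarrow> 0 \<le> t \<Longrightarrow> g (s + t) \<le> g s + g t"
  shows "((\<lambda>T. g T / T) \<longlongrightarrow> (INF T\<in>{0<..}. g T / T)) at_top"
proof -
  define L where "L = (INF T\<in>{0<..}. g T / T)"
  have bdd: "bdd_below ((\<lambda>T. g T / T) ` {0<..})"
    by (rule bdd_belowI2[of _ 0]) (simp add: nonneg)
  have low: "L \<le> g T / T" if "T > 0" for T
    unfolding L_def using that by (intro cINF_lower[OF bdd]) simp
  show ?thesis unfolding L_def[symmetric]
  proof (rule order_tendstoI)
    fix a assume "a < L"
    show "eventually (\<lambda>T. a < g T / T) at_top"
    proof (rule eventually_mono[OF eventually_gt_at_top[of 0]])
      fix T :: real assume "T > 0"
      then show "a < g T / T" using low[of T] \<open>a < L\<close> by linarith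
    qed
  next
    fix a assume "L < a"
    then obtain T0 where T0: "T0 > 0" "g T0 / T0 < (L + a) / 2"
      using cINF_less_iff[OF _ bdd, of "(L + a) / 2"] unfolding L_def by auto
    show "eventually (\<lambda>T. g T / T < a) at_top"
    proof (rule eventually_mono[OF eventually_gt_at_top[of "max T0 (2 * g T0 / (a - L))"]])
      fix T assume T: "max T0 (2 * g T0 / (a - L)) < T"
      then have "T > 0" "2 * g T0 < T * (a - L)"
        using T0(1) \<open>L < a\<close> by (simp_all add: divide_less_eq)
      then have "g T0 / T < (a - L) / 2" by (simp add: divide_less_eq mult.commute)
      moreover have "g T / T \<le> g T0 / T0 + g T0 / T"
        using mono nonneg sub T0(1) \<open>T > 0\<close> by (rule subadditive_quotient_le)
      ultimately show "g T / T < a" using T0(2) by argo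
    qed
  qed
qed

lemma submultiplicative_ln_tendsto:
  fixes F :: "real \<Rightarrow> real"
  assumes mono: "\<And>s t. 0 \<le> s \<Longrightarrow> s \<le> t \<Longrightarrow> F s \<le> F t" and ge1: "\<And>t. 0 \<le> t \<Longrightarrow> F t \<ge> 1"
    and sub: "\<And>s t. 0 \<le> s \<Longrightarrow> 0 \<le> t \<Longrightarrow> F (s + t) \<le> F s * F t"
  obtains L where "L \<ge> 0" "((\<lambda>T. ln (F T) / T) \<longlongrightarrow> L) at_top"
proof -
  have pos: "0 < F t" if "0 \<le> t" for t using ge1[OF that] by simp
  have "((\<lambda>T. ln (F T) / T) \<longlongrightarrow> (INF T\<in>{0<..}. ln (F T) / T)) at_top"
  proof (rule subadditive_tendsto_Inf)
    show "ln (F s) \<le> ln (F t)" if "0 \<le> s" "s \<le> t" for s t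
      using mono[OF that] pos that by simp
    show "0 \<le> ln (F t)" if "0 \<le> t" for t using ge1[OF that] by simp
    show "ln (F (s + t)) \<le> ln (F s) + ln (F t)" if "0 \<le> s" "0 \<le> t" for s t
    proof -
      have "ln (F (s + t)) \<le> ln (F s * F t)" using sub[OF that] pos that by simp
      then show ?thesis using pos[OF that(1)] pos[OF that(2)] by (simp add: ln_mult)
    qed
  qed
  moreover have "(INF T\<in>{0<..}. ln (F T) / T) \<ge> 0"
    using ge1 by (intro cINF_greatest) auto
  ultimately show thesis using that by blast
qed

lemma tendsto_const_divide_at_top: "((\<lambda>T::real. c / T) \<longlongrightarrow> 0) at_top"
  by (rule tendsto_divide_0[OF tendsto_const filterlim_at_top_imp_at_infinity[OF filterlim_ident]])

lemma tendsto_quotient_shift: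
  assumes "((\<lambda>T. h T / T) \<longlongrightarrow> (L::real)) at_top"
  shows "((\<lambda>T. h (T + b) / T) \<longlongrightarrow> L) at_top"
proof -
  have "((\<lambda>T. h (T + b) / (T + b)) \<longlongrightarrow> L) at_top"
    using filterlim_compose[OF assms filterlim_tendsto_add_at_top[OF tendsto_const[of b] filterlim_ident]]
    by (simp add: o_def add.commute)
  then have "((\<lambda>T. h (T + b) / (T + b) * (1 + b / T)) \<longlongrightarrow> L * (1 + 0)) at_top"
    by (intro tendsto_intros tendsto_const_divide_at_top)
  moreover have "eventually (\<lambda>T. h (T + b) / (T + b) * (1 + b / T) = h (T + b) / T) at_top"
    using eventually_gt_at_top[of "\<bar>b\<bar>"]
  proof (rule eventually_mono)
    fix T assume "T > \<bar>b\<bar>"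
    then have "T \<noteq> 0" "T + b \<noteq> 0" by auto
    moreover have "1 + b / T = (T + b) / T" using \<open>T \<noteq> 0\<close> by (simp add: field_simps)
    ultimately show "h (T + b) / (T + b) * (1 + b / T) = h (T + b) / T" by simp
  qed
  ultimately show ?thesis by (simp add: tendsto_cong)
qed

lemma tendsto_ln_scale_shift:
  fixes F :: "real \<Rightarrow> real"
  assumes lim: "((\<lambda>T. ln (F T) / T) \<longlongrightarrow> L) at_top"
    and pos: "\<And>t. t \<ge> 0 \<Longrightarrow> F t > 0" and "K > 0"
  shows "((\<lambda>T. ln (K * F (T + a)) / T) \<longlongrightarrow> L) at_top"
proof -
  have "((\<lambda>T. ln K / T + ln (F (T + a)) / T) \<longlongrightarrow> 0 + L) at_top"
    by (intro tendsto_add tendsto_const_divide_at_top tendsto_quotient_shift[OF lim])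
  moreover have "eventually (\<lambda>T. ln K / T + ln (F (T + a)) / T = ln (K * F (T + a)) / T) at_top"
  proof (rule eventually_mono[OF eventually_ge_at_top[of "\<bar>a\<bar>"]])
    fix T assume "\<bar>a\<bar> \<le> T"
    then have "F (T + a) > 0" using pos by simp
    then show "ln K / T + ln (F (T + a)) / T = ln (K * F (T + a)) / T"
      using \<open>K > 0\<close> by (simp add: ln_mult add_divide_distrib)
  qed
  ultimately show ?thesis by (simp add: tendsto_cong)
qed

lemma ln_growth_rate_squeeze:
  fixes F G :: "real \<Rightarrow> real"
  assumes lim: "((\<lambda>T. ln (F T) / T) \<longlongrightarrow> L) at_top"
    and pos: "\<And>t. t \<ge> 0 \<Longrightarrow> F t > 0" and K: "K > 0"
    and bnd: "eventually (\<lambda>T. F (T - a) / K \<le> G T \<and> G T \<le> K * F (T + a)) at_top"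
  shows "((\<lambda>T. ln (G T) / T) \<longlongrightarrow> L) at_top"
proof (rule tendsto_sandwich)
  show "((\<lambda>T. ln (inverse K * F (T + - a)) / T) \<longlongrightarrow> L) at_top"
    using K by (intro tendsto_ln_scale_shift[OF lim pos]) simp_all
  show "((\<lambda>T. ln (K * F (T + a)) / T) \<longlongrightarrow> L) at_top"
    using K by (intro tendsto_ln_scale_shift[OF lim pos])
  have ev: "eventually (\<lambda>T. T > \<bar>a\<bar> \<and> F (T - a) / K \<le> G T \<and> G T \<le> K * F (T + a)) at_top"
    using eventually_conj[OF eventually_gt_at_top bnd] by simp
  have T_pos: "0 < T \<and> 0 < F (T - a) / K \<and> 0 < G T" if "\<bar>a\<bar> < T" "F (T - a) / K \<le> G T" for T
  proof -
    have "0 < F (T - a) / K" using that(1) pos[of "T - a"] K by simp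
    then show ?thesis using that by linarith
  qed
  show "eventually (\<lambda>T. ln (inverse K * F (T + - a)) / T \<le> ln (G T) / T) at_top"
  proof (rule eventually_mono[OF ev])
    fix T assume T: "\<bar>a\<bar> < T \<and> F (T - a) / K \<le> G T \<and> G T \<le> K * F (T + a)"
    then have "ln (F (T - a) / K) \<le> ln (G T)" using T_pos[of T] by (intro ln_mono) auto
    then show "ln (inverse K * F (T + - a)) / T \<le> ln (G T) / T"
      using T_pos[of T] T by (intro divide_right_mono) (auto simp: field_simps)
  qed
  show "eventually (\<lambda>T. ln (G T) / T \<le> ln (K * F (T + a)) / T) at_top"
  proof (rule eventually_mono[OF ev])
    fix T assume T: "\<bar>a\<bar> < T \<and> F (T - a) / K \<le> G T \<and> G T \<le> K * F (T + a)"
    then have "ln (G T) \<le> ln (K * F (T + a))" using T_pos[of T] by (intro ln_mono) auto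
    then show "ln (G T) / T \<le> ln (K * F (T + a)) / T"
      using T_pos[of T] T by (intro divide_right_mono) auto
  qed
qed

section \<open>Counting orbit points\<close>

lemma class_M_codiameter_nonneg: "class_M \<delta> D x \<Gamma> \<Longrightarrow> D \<ge> 0"
  unfolding class_M_def qc_cocompact_def by (meson order_trans zero_le_dist)

definition group_ball :: "('a::metric_space \<Rightarrow> 'a) set \<Rightarrow> 'a \<Rightarrow> real \<Rightarrow> ('a \<Rightarrow> 'a) set" where
  "group_ball \<Gamma> x T = {g\<in>\<Gamma>. dist (g x) x \<le> T}"

lemma finite_group_ball: "discrete_group \<Gamma> \<Longrightarrow> finite (group_ball \<Gamma> x T)"
  unfolding discrete_group_def group_ball_def by blast

lemma card_group_ball_mono:
  "discrete_group \<Gamma> \<Longrightarrow> T \<le> T' \<Longrightarrow> card (group_ball \<Gamma> x T) \<le> card (group_ball \<Gamma> x T')"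
  by (rule card_mono[OF finite_group_ball]) (auto simp: group_ball_def)

lemma id_in_group_ball: "isom_group \<Gamma> \<Longrightarrow> T \<ge> 0 \<Longrightarrow> id \<in> group_ball \<Gamma> x T"
  unfolding group_ball_def isom_group_def by simp

lemma card_group_ball_ge_1:
  "isom_group \<Gamma> \<Longrightarrow> discrete_group \<Gamma> \<Longrightarrow> T \<ge> 0 \<Longrightarrow> card (group_ball \<Gamma> x T) \<ge> 1"
  using id_in_group_ball finite_group_ball by (metis One_nat_def Suc_leI card_gt_0_iff empty_iff)

lemma card_orbit_cball:
  assumes "isom_group \<Gamma>" "discrete_group \<Gamma>" "torsion_free \<Gamma>"
  shows "card ((\<lambda>g. g x) ` \<Gamma> \<inter> cball x T) = card (group_ball \<Gamma> x T)"
proof -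
  have "(\<lambda>g. g x) ` \<Gamma> \<inter> cball x T = (\<lambda>g. g x) ` group_ball \<Gamma> x T"
    unfolding group_ball_def by (auto simp: dist_commute)
  moreover have "inj_on (\<lambda>g. g x) (group_ball \<Gamma> x T)"
    using inj_on_orbit[OF assms] by (rule inj_on_subset) (auto simp: group_ball_def)
  ultimately show ?thesis by (simp add: card_image)
qed

lemma card_le_card_times_card:
  assumes "A \<subseteq> (\<lambda>(b, c). f b c) ` (B \<times> C)" "finite B" "finite C"
  shows "card A \<le> card B * card C"
proof -
  have "card A \<le> card ((\<lambda>(b, c). f b c) ` (B \<times> C))"
    using assms by (intro card_mono) auto
  also have "\<dots> \<le> card (B \<times> C)" by (rule card_image_le) (use assms in simp)
  finally show ?thesis by (simp add: card_cartesian_product)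
qed

text \<open>Splitting a geodesic from \<open>x\<close> to \<open>g x\<close> at distance \<open>T\<close>: the splitting point lies
  \<open>16\<delta>\<close>-close to the hull, and by cocompactness \<open>D\<close>-close to an orbit point \<open>h x\<close>.\<close>

lemma group_ball_add_split:
  fixes x :: "'a::metric_space"
  assumes M: "class_M \<delta> D x \<Gamma>" and "T \<ge> 0" "S \<ge> 0"
    and g: "g \<in> group_ball \<Gamma> x (T + S)"
  obtains h where "h \<in> group_ball \<Gamma> x (T + (16 * \<delta> + D))"
    "inv h \<circ> g \<in> group_ball \<Gamma> x (S + (16 * \<delta> + D))"
proof -
  have P: "proper_space_pred TYPE('a)" and G: "geodesic_space TYPE('a)"
    and H: "gromov_hyperbolic TYPE('a) \<delta>" and \<Gamma>: "isom_group \<Gamma>"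
    and qc: "qc_cocompact \<Gamma> x D" and xY: "x \<in> QC_Hull x (limit_set \<Gamma> x)"
    using M unfolding class_M_def by auto
  have c: "16 * \<delta> + D \<ge> 0"
    using gromov_hyperbolic_nonneg[OF H] class_M_codiameter_nonneg[OF M] by simp
  have g\<Gamma>: "g \<in> \<Gamma>" and gd: "dist x (g x) \<le> T + S"
    using g unfolding group_ball_def by (auto simp: dist_commute)
  show thesis
  proof (cases "dist x (g x) \<le> T")
    case True
    have "inv g \<circ> g = id"
      using isometry_inv_left[OF isom_group_isometry[OF \<Gamma> g\<Gamma>]] by (auto simp: fun_eq_iff)
    then show thesis
      using that[of g] id_in_group_ball[OF \<Gamma>, of "S + (16 * \<delta> + D)" x] g\<Gamma> True c \<open>S \<ge> 0\<close>
      unfolding group_ball_def by (simp add: dist_commute)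
  next
    case False
    obtain p where p: "dist x p = T" "metric_between x p (g x)"
      using geodesic_space_point_between[OF G, of T x "g x"] \<open>T \<ge> 0\<close> False by auto
    have "g x \<in> QC_Hull x (limit_set \<Gamma> x)" by (rule QC_Hull_isom_group_invariant[OF \<Gamma> g\<Gamma> xY])
    moreover have "limit_set \<Gamma> x \<subseteq> gromov_boundary x" unfolding limit_set_def by auto
    ultimately obtain z where z: "z \<in> QC_Hull x (limit_set \<Gamma> x)" "dist z p \<le> 16 * \<delta>"
      using QC_Hull_quasiconvex[OF H G P _ xY _ p(2)] by blast
    obtain h where h: "h \<in> \<Gamma>" "dist (h x) z \<le> D"
      using qc xY z(1) unfolding qc_cocompact_def by blast
    have "dist p (g x) = dist x (g x) - T" using p unfolding metric_between_def by simp
    then have "dist (g x) (h x) \<le> S + (16 * \<delta> + D)"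
      using dist_triangle[of "g x" "h x" p] dist_triangle[of p "h x" z] h z gd
      by (simp add: dist_commute)
    moreover have "dist (h x) x \<le> T + (16 * \<delta> + D)"
      using dist_triangle[of "h x" x z] dist_triangle[of z x p] h z p by (simp add: dist_commute)
    ultimately show thesis
      using that[of h] h(1) isom_group_inv_comp_dist[OF \<Gamma> h(1), of g x]
        isom_group_inv_comp_mem[OF \<Gamma> h(1) g\<Gamma>]
      unfolding group_ball_def by simp
  qed
qed

lemma card_group_ball_add_le:
  fixes x :: "'a::metric_space"
  assumes M: "class_M \<delta> D x \<Gamma>" and "T \<ge> 0" "S \<ge> 0"
  shows "card (group_ball \<Gamma> x (T + S))
    \<le> card (group_ball \<Gamma> x (T + (16 * \<delta> + D))) * card (group_ball \<Gamma> x (S + (16 * \<delta> + D)))"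
proof (rule card_le_card_times_card)
  have \<Gamma>: "isom_group \<Gamma>" and "discrete_group \<Gamma>" using M unfolding class_M_def by auto
  show "finite (group_ball \<Gamma> x (T + (16 * \<delta> + D)))" "finite (group_ball \<Gamma> x (S + (16 * \<delta> + D)))"
    using finite_group_ball[OF \<open>discrete_group \<Gamma>\<close>] by blast+
  show "group_ball \<Gamma> x (T + S) \<subseteq> (\<lambda>(h, k). h \<circ> k) `
      (group_ball \<Gamma> x (T + (16 * \<delta> + D)) \<times> group_ball \<Gamma> x (S + (16 * \<delta> + D)))"
  proof
    fix g assume "g \<in> group_ball \<Gamma> x (T + S)"
    then obtain h where h: "h \<in> group_ball \<Gamma> x (T + (16 * \<delta> + D))"
      "inv h \<circ> g \<in> group_ball \<Gamma> x (S + (16 * \<delta> + D))"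
      by (rule group_ball_add_split[OF M assms(2,3)])
    moreover have "g = h \<circ> (inv h \<circ> g)"
      using isom_group_comp_inv_comp[OF \<Gamma>, of h g] h(1) unfolding group_ball_def by simp
    ultimately show "g \<in> (\<lambda>(h, k). h \<circ> k) `
        (group_ball \<Gamma> x (T + (16 * \<delta> + D)) \<times> group_ball \<Gamma> x (S + (16 * \<delta> + D)))"
      by (auto intro!: image_eqI[of _ _ "(h, inv h \<circ> g)"])
  qed
qed

lemma group_ball_growth_rate:
  fixes x :: "'a::metric_space"
  assumes M: "class_M \<delta> D x \<Gamma>"
  obtains L where "L \<ge> 0" "((\<lambda>T. ln (real (card (group_ball \<Gamma> x T))) / T) \<longlongrightarrow> L) at_top"
proof -
  have H: "gromov_hyperbolic TYPE('a) \<delta>" and \<Gamma>: "isom_group \<Gamma>" and dg: "discrete_group \<Gamma>"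
    using M unfolding class_M_def by auto
  define c where "c = 16 * \<delta> + D"
  have c: "c \<ge> 0"
    using gromov_hyperbolic_nonneg[OF H] class_M_codiameter_nonneg[OF M] unfolding c_def by simp
  define f where "f T = real (card (group_ball \<Gamma> x T))" for T
  have mono: "f s \<le> f t" if "s \<le> t" for s t
    unfolding f_def using card_group_ball_mono[OF dg that] by simp
  have ge1: "f t \<ge> 1" if "t \<ge> 0" for t
    unfolding f_def using card_group_ball_ge_1[OF \<Gamma> dg that] by simp
  text \<open>The shift by \<open>2c\<close> turns the almost-submultiplicativity into submultiplicativity.\<close>
  obtain L where L: "L \<ge> 0" "((\<lambda>T. ln (f (T + 2 * c)) / T) \<longlongrightarrow> L) at_top"
  proof (rule submultiplicative_ln_tendsto)
    show "f (s + 2 * c) \<le> f (t + 2 * c)" if "0 \<le> s" "s \<le> t" for s t using mono that by simp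
    show "1 \<le> f (t + 2 * c)" if "0 \<le> t" for t using ge1 that c by simp
    show "f (s + t + 2 * c) \<le> f (s + 2 * c) * f (t + 2 * c)" if "0 \<le> s" "0 \<le> t" for s t
      using card_group_ball_add_le[OF M, of "s + c" "t + c"] that c
      unfolding f_def c_def by (simp add: algebra_simps flip: of_nat_mult)
  qed (rule that)
  have "((\<lambda>T. ln (f T) / T) \<longlongrightarrow> L) at_top"
  proof (rule ln_growth_rate_squeeze[OF L(2), where K=1 and a="2 * c"])
    show "f (t + 2 * c) > 0" if "t \<ge> 0" for t using ge1[of "t + 2 * c"] that c by simp
    show "eventually (\<lambda>T. f (T - 2 * c + 2 * c) / 1 \<le> f T \<and> f T \<le> 1 * f (T + 2 * c + 2 * c)) at_top"
      using mono c by simp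
  qed simp
  then show thesis using that L(1) unfolding f_def by blast
qed

section \<open>Covering and packing numbers of balls in the hull\<close>

lemma Cov_le_card:
  assumes "S \<subseteq> Z" "\<And>z. z \<in> Z \<Longrightarrow> \<exists>s\<in>S. dist z s \<le> r" "finite S"
  shows "Cov Z r \<le> enat (card S)"
  unfolding Cov_def using assms by (intro INF_lower2[of S]) auto

lemma card_le_Pack:
  assumes "P \<subseteq> Z" "\<And>a b. a \<in> P \<Longrightarrow> b \<in> P \<Longrightarrow> a \<noteq> b \<Longrightarrow> 2 * r < dist a b" "finite P"
  shows "enat (card P) \<le> Pack Z r"
  unfolding Pack_def using assms by (intro SUP_upper2[of P]) auto

text \<open>Distinct points of a \<open>2r\<close>-separated set have distinct nearest points in an \<open>r\<close>-dense set.\<close>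

lemma Pack_le_Cov: "Pack Z r \<le> Cov Z r"
  unfolding Pack_def Cov_def
proof (intro SUP_least INF_greatest)
  fix P S assume P: "P \<in> {S. S \<subseteq> Z \<and> (\<forall>a\<in>S. \<forall>b\<in>S. a \<noteq> b \<longrightarrow> 2 * r < dist a b)}"
    and S: "S \<in> {S. S \<subseteq> Z \<and> (\<forall>z\<in>Z. \<exists>s\<in>S. dist z s \<le> r)}"
  show "(if finite P then enat (card P) else \<infinity>) \<le> (if finite S then enat (card S) else \<infinity>)"
  proof (cases "finite S")
    case True
    have "\<forall>p\<in>P. \<exists>s\<in>S. dist p s \<le> r" using P S by blast
    then obtain \<sigma> where \<sigma>: "\<forall>p\<in>P. \<sigma> p \<in> S \<and> dist p (\<sigma> p) \<le> r"
      by (metis (full_types))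
    have inj: "inj_on \<sigma> P"
    proof (rule inj_onI, rule ccontr)
      fix p q assume pq: "p \<in> P" "q \<in> P" "\<sigma> p = \<sigma> q" "p \<noteq> q"
      have "dist p (\<sigma> p) \<le> r" "dist q (\<sigma> q) \<le> r" using \<sigma> pq(1,2) by auto
      then have "dist p q \<le> 2 * r"
        using dist_triangle[of p q "\<sigma> p"] pq(3) by (simp add: dist_commute)
      then show False using P pq by force
    qed
    have sub: "\<sigma> ` P \<subseteq> S" using \<sigma> by auto
    have "finite P" using finite_imageD[OF finite_subset[OF sub True] inj] .
    moreover have "card P \<le> card S" using card_inj_on_le[OF inj sub True] .
    ultimately show ?thesis using True by simp
  qed simp
qed

lemma finite_separated_net:
  assumes "finite A" "e \<ge> 0"
  obtains P where "P \<subseteq> A" "\<And>a b. a \<in> P \<Longrightarrow> b \<in> P \<Longrightarrow> a \<noteq> b \<Longrightarrow> e < dist a b"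
    "\<And>a. a \<in> A \<Longrightarrow> \<exists>p\<in>P. dist a p \<le> e"
proof -
  have "\<exists>P\<subseteq>A. (\<forall>a\<in>P. \<forall>b\<in>P. a \<noteq> b \<longrightarrow> e < dist a b) \<and> (\<forall>a\<in>A. \<exists>p\<in>P. dist a p \<le> e)"
    using assms(1)
  proof (induction rule: finite_induct)
    case (insert a A)
    then obtain P where P: "P \<subseteq> A" "\<forall>a\<in>P. \<forall>b\<in>P. a \<noteq> b \<longrightarrow> e < dist a b"
      "\<forall>a\<in>A. \<exists>p\<in>P. dist a p \<le> e" by blast
    show ?case
    proof (cases "\<exists>p\<in>P. dist a p \<le> e")
      case True
      then show ?thesis using P by (intro exI[of _ P]) auto
    next
      case False
      then show ?thesis using P assms(2) by (intro exI[of _ "insert a P"]) (auto simp: dist_commute)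
    qed
  qed simp
  then obtain P where "P \<subseteq> A" "\<forall>a\<in>P. \<forall>b\<in>P. a \<noteq> b \<longrightarrow> e < dist a b"
    "\<forall>a\<in>A. \<exists>p\<in>P. dist a p \<le> e" by blast
  then show thesis by (intro that[of P]) auto
qed

lemma Cov_le_card_half_net:
  assumes Q: "finite Q" and near: "\<And>z. z \<in> Z \<Longrightarrow> \<exists>q\<in>Q. dist z q \<le> r / 2"
  shows "Cov Z r \<le> enat (card Q)"
proof -
  define Q' where "Q' = {q\<in>Q. \<exists>z\<in>Z. dist z q \<le> r / 2}"
  define pick where "pick q = (SOME z. z \<in> Z \<and> dist z q \<le> r / 2)" for q
  have pick: "pick q \<in> Z \<and> dist (pick q) q \<le> r / 2" if "q \<in> Q'" for q
    using that unfolding Q'_def pick_def by (metis (mono_tags, lifting) mem_Collect_eq someI)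
  have fin: "finite Q'" unfolding Q'_def using Q by simp
  have "Cov Z r \<le> enat (card (pick ` Q'))"
  proof (rule Cov_le_card)
    show "pick ` Q' \<subseteq> Z" "finite (pick ` Q')" using pick fin by auto
    show "\<exists>s\<in>pick ` Q'. dist z s \<le> r" if z: "z \<in> Z" for z
    proof -
      obtain q where q: "q \<in> Q" "dist z q \<le> r / 2" using near[OF z] by blast
      then have "q \<in> Q'" unfolding Q'_def using z by blast
      then show ?thesis
        using pick[of q] q(2) dist_triangle[of z "pick q" q] by (force simp: dist_commute)
    qed
  qed
  also have "\<dots> \<le> enat (card Q)"
    using card_image_le[OF fin, of pick] card_mono[OF Q, of Q'] unfolding Q'_def by auto
  finally show ?thesis .
qed

text \<open>Translates of a finite \<open>r/2\<close>-net of \<open>cball x D\<close> by \<open>group_ball \<Gamma> x (T + D)\<close> form an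
  \<open>r/2\<close>-net of the ball of radius \<open>T\<close> in the hull, by cocompactness.\<close>

lemma Cov_hull_ball_le_net:
  fixes x :: "'a::metric_space"
  assumes M: "class_M \<delta> D x \<Gamma>"
    and C0: "finite C0" "\<And>y. y \<in> cball x D \<Longrightarrow> \<exists>c\<in>C0. dist y c \<le> r / 2"
  shows "Cov (cball x T \<inter> QC_Hull x (limit_set \<Gamma> x)) r
    \<le> enat (card C0 * card (group_ball \<Gamma> x (T + D)))"
proof -
  have \<Gamma>: "isom_group \<Gamma>" and dg: "discrete_group \<Gamma>"
    and qc: "qc_cocompact \<Gamma> x D" and xY: "x \<in> QC_Hull x (limit_set \<Gamma> x)"
    using M unfolding class_M_def by auto
  define Q where "Q = (\<lambda>(h, c). h c) ` (group_ball \<Gamma> x (T + D) \<times> C0)"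
  have "Cov (cball x T \<inter> QC_Hull x (limit_set \<Gamma> x)) r \<le> enat (card Q)"
  proof (rule Cov_le_card_half_net)
    show "finite Q" unfolding Q_def using finite_group_ball[OF dg] C0(1) by simp
    fix y assume y: "y \<in> cball x T \<inter> QC_Hull x (limit_set \<Gamma> x)"
    obtain h where h: "h \<in> \<Gamma>" "dist (h x) y \<le> D"
      using qc xY y unfolding qc_cocompact_def by blast
    have hi: "isometry h" by (rule isom_group_isometry[OF \<Gamma> h(1)])
    have "dist x (inv h y) \<le> D"
      using h(2) isometry_dist[OF hi, of x "inv h y"] isometry_inv_right[OF hi] by simp
    then obtain c where c: "c \<in> C0" "dist (inv h y) c \<le> r / 2" using C0(2) by force
    then have "dist y (h c) \<le> r / 2"
      using isometry_dist[OF hi, of "inv h y" c] isometry_inv_right[OF hi] by simp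
    moreover have "h \<in> group_ball \<Gamma> x (T + D)"
      using h y dist_triangle[of "h x" x y] unfolding group_ball_def by (simp add: dist_commute)
    ultimately show "\<exists>q\<in>Q. dist y q \<le> r / 2" unfolding Q_def using c(1) by force
  qed
  also have "card Q \<le> card (group_ball \<Gamma> x (T + D) \<times> C0)"
    unfolding Q_def using finite_group_ball[OF dg] C0(1) by (intro card_image_le) simp
  then have "enat (card Q) \<le> enat (card C0 * card (group_ball \<Gamma> x (T + D)))"
    by (simp add: card_cartesian_product mult.commute)
  finally show ?thesis .
qed

lemma Cov_hull_ball_le:
  fixes x :: "'a::metric_space"
  assumes M: "class_M \<delta> D x \<Gamma>" and r: "r > 0"
  obtains N :: nat where
    "\<And>T. Cov (cball x T \<inter> QC_Hull x (limit_set \<Gamma> x)) r \<le> enat (N * card (group_ball \<Gamma> x (T + D)))"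
proof -
  have "compact (cball x D)" using M unfolding class_M_def proper_space_pred_def by blast
  moreover have "\<And>c. c \<in> cball x D \<Longrightarrow> open (ball c (r / 2))" by simp
  moreover have "cball x D \<subseteq> (\<Union>c\<in>cball x D. ball c (r / 2))" using r by auto
  ultimately obtain C0 where C0: "C0 \<subseteq> cball x D" "finite C0" "cball x D \<subseteq> (\<Union>c\<in>C0. ball c (r / 2))"
    by (rule compactE_image)
  then have "\<exists>c\<in>C0. dist y c \<le> r / 2" if "y \<in> cball x D" for y
    using that by (force simp: dist_commute)
  then show thesis using that Cov_hull_ball_le_net[OF M C0(2)] by blast
qed

lemma card_le_net_times_card_group_ball:
  assumes \<Gamma>: "isom_group \<Gamma>" and dg: "discrete_group \<Gamma>" and A: "A \<subseteq> \<Gamma>"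
    and P: "finite P" "P \<subseteq> (\<lambda>g. g x) ` A" and net: "\<And>g. g \<in> A \<Longrightarrow> \<exists>p\<in>P. dist (g x) p \<le> R"
  shows "card A \<le> card P * card (group_ball \<Gamma> x R)"
proof -
  have "\<forall>p\<in>P. \<exists>g. g \<in> A \<and> g x = p" using P(2) by blast
  then obtain rep where rep: "\<forall>p\<in>P. rep p \<in> A \<and> rep p x = p" by (rule bchoice[THEN exE])
  show ?thesis
  proof (rule card_le_card_times_card)
    show "A \<subseteq> (\<lambda>(p, k). rep p \<circ> k) ` (P \<times> group_ball \<Gamma> x R)"
    proof
      fix g assume g: "g \<in> A"
      then obtain p where p: "p \<in> P" "dist (g x) p \<le> R" using net by blast
      have h: "rep p \<in> \<Gamma>" "rep p x = p" using rep p(1) A by auto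
      have "dist ((inv (rep p) \<circ> g) x) x = dist (g x) p"
        using isom_group_inv_comp_dist[OF \<Gamma> h(1), of g x] h(2) by (simp only:)
      then have "inv (rep p) \<circ> g \<in> group_ball \<Gamma> x R"
        using isom_group_inv_comp_mem[OF \<Gamma> h(1)] g A p(2) unfolding group_ball_def by auto
      moreover have "rep p \<circ> (inv (rep p) \<circ> g) = g" by (rule isom_group_comp_inv_comp[OF \<Gamma> h(1)])
      ultimately show "g \<in> (\<lambda>(p, k). rep p \<circ> k) ` (P \<times> group_ball \<Gamma> x R)"
        using p(1) by (intro image_eqI[where x="(p, inv (rep p) \<circ> g)"]) simp_all
    qed
  qed (use P(1) finite_group_ball[OF dg] in auto)
qed

text \<open>A maximal \<open>2r\<close>-separated set of orbit points is a packing, and every group element is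
  within \<open>2r\<close> of one of them.\<close>

lemma card_group_ball_le_Pack:
  fixes x :: "'a::metric_space"
  assumes M: "class_M \<delta> D x \<Gamma>" and "r \<ge> 0"
    and fin: "Pack (cball x T \<inter> QC_Hull x (limit_set \<Gamma> x)) r \<noteq> \<infinity>"
  shows "card (group_ball \<Gamma> x T)
    \<le> the_enat (Pack (cball x T \<inter> QC_Hull x (limit_set \<Gamma> x)) r) * card (group_ball \<Gamma> x (2 * r))"
proof -
  have \<Gamma>: "isom_group \<Gamma>" and dg: "discrete_group \<Gamma>" and xY: "x \<in> QC_Hull x (limit_set \<Gamma> x)"
    using M unfolding class_M_def by auto
  define A where "A = group_ball \<Gamma> x T"
  have fA: "finite A" unfolding A_def by (rule finite_group_ball[OF dg])
  obtain P where P: "P \<subseteq> (\<lambda>g. g x) ` A" "\<And>a b. a \<in> P \<Longrightarrow> b \<in> P \<Longrightarrow> a \<noteq> b \<Longrightarrow> 2 * r < dist a b"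
    and net: "\<And>a. a \<in> (\<lambda>g. g x) ` A \<Longrightarrow> \<exists>p\<in>P. dist a p \<le> 2 * r"
    by (rule finite_separated_net[of "(\<lambda>g. g x) ` A" "2 * r"]) (use fA \<open>r \<ge> 0\<close> in auto)
  have fP: "finite P" using P(1) fA finite_subset by blast
  have "P \<subseteq> cball x T \<inter> QC_Hull x (limit_set \<Gamma> x)"
    using P(1) QC_Hull_isom_group_invariant[OF \<Gamma> _ xY]
    unfolding A_def group_ball_def by (auto simp: dist_commute)
  then have "enat (card P) \<le> Pack (cball x T \<inter> QC_Hull x (limit_set \<Gamma> x)) r"
    by (rule card_le_Pack[OF _ P(2) fP])
  then have "card P \<le> the_enat (Pack (cball x T \<inter> QC_Hull x (limit_set \<Gamma> x)) r)"
    using fin by (cases "Pack (cball x T \<inter> QC_Hull x (limit_set \<Gamma> x)) r") auto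
  moreover have "card A \<le> card P * card (group_ball \<Gamma> x (2 * r))"
    using card_le_net_times_card_group_ball[OF \<Gamma> dg _ fP P(1)] net
    unfolding A_def group_ball_def by blast
  ultimately show ?thesis unfolding A_def by (meson le_trans mult_le_mono1)
qed

section \<open>Growth of covering and packing numbers\<close>

lemma crit_exp_eq_group_ball_growth:
  assumes "isom_group \<Gamma>" "discrete_group \<Gamma>" "torsion_free \<Gamma>"
    and "((\<lambda>T. ln (real (card (group_ball \<Gamma> x T))) / T) \<longlongrightarrow> L) at_top"
  shows "crit_exp \<Gamma> x = ereal L"
  unfolding crit_exp_def card_orbit_cball[OF assms(1-3)]
  by (rule lim_imp_Limsup[OF trivial_limit_at_top_linorder tendsto_ereal[OF assms(4)]])

lemma Pack_Cov_hull_ball_bounds: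
  fixes x :: "'a::metric_space"
  assumes M: "class_M \<delta> D x \<Gamma>" and r: "r > 0"
  defines "Y \<equiv> QC_Hull x (limit_set \<Gamma> x)"
  obtains K :: real where "K \<ge> 1"
    "\<And>T. Cov (cball x T \<inter> Y) r \<noteq> \<infinity>" "\<And>T. Pack (cball x T \<inter> Y) r \<noteq> \<infinity>"
    "\<And>T. T \<ge> 0 \<Longrightarrow> real (card (group_ball \<Gamma> x T)) / K \<le> real (the_enat (Pack (cball x T \<inter> Y) r))"
    "\<And>T. the_enat (Pack (cball x T \<inter> Y) r) \<le> the_enat (Cov (cball x T \<inter> Y) r)"
    "\<And>T. real (the_enat (Cov (cball x T \<inter> Y) r)) \<le> K * real (card (group_ball \<Gamma> x (T + D)))"
proof -
  have \<Gamma>: "isom_group \<Gamma>" and dg: "discrete_group \<Gamma>" using M unfolding class_M_def by auto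
  obtain N :: nat where N: "\<And>T. Cov (cball x T \<inter> Y) r \<le> enat (N * card (group_ball \<Gamma> x (T + D)))"
    by (rule Cov_hull_ball_le[OF M r, folded Y_def]) (rule that)
  define M where "M = max 1 (max N (card (group_ball \<Gamma> x (2 * r))))"
  define K where "K = real M"
  have cov: "Cov (cball x T \<inter> Y) r \<noteq> \<infinity>"
    "the_enat (Cov (cball x T \<inter> Y) r) \<le> N * card (group_ball \<Gamma> x (T + D))" for T
    using N[of T] by (cases "Cov (cball x T \<inter> Y) r"; simp)+
  have pack: "Pack (cball x T \<inter> Y) r \<noteq> \<infinity>"
    "the_enat (Pack (cball x T \<inter> Y) r) \<le> the_enat (Cov (cball x T \<inter> Y) r)" for T
    using Pack_le_Cov[of "cball x T \<inter> Y" r] cov(1)[of T]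
    by (cases "Pack (cball x T \<inter> Y) r"; cases "Cov (cball x T \<inter> Y) r"; simp)+
  show thesis
  proof (rule that)
    show "K \<ge> 1" unfolding K_def M_def by simp
    show "real (the_enat (Cov (cball x T \<inter> Y) r)) \<le> K * real (card (group_ball \<Gamma> x (T + D)))" for T
    proof -
      have "the_enat (Cov (cball x T \<inter> Y) r) \<le> M * card (group_ball \<Gamma> x (T + D))"
        using cov(2)[of T] by (rule order_trans) (intro mult_le_mono1, simp add: M_def)
      then show ?thesis unfolding K_def by (simp flip: of_nat_mult)
    qed
    show "real (card (group_ball \<Gamma> x T)) / K \<le> real (the_enat (Pack (cball x T \<inter> Y) r))"
      if "T \<ge> 0" for T
    proof -
      have "card (group_ball \<Gamma> x T) \<le> the_enat (Pack (cball x T \<inter> Y) r) * card (group_ball \<Gamma> x (2 * r))"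
        using card_group_ball_le_Pack[OF M _ pack(1)[unfolded Y_def]] r unfolding Y_def by simp
      also have "\<dots> \<le> the_enat (Pack (cball x T \<inter> Y) r) * M"
        unfolding M_def by (intro mult_le_mono2) simp
      finally have "real (card (group_ball \<Gamma> x T)) \<le> real (the_enat (Pack (cball x T \<inter> Y) r)) * K"
        unfolding K_def by (simp flip: of_nat_mult)
      moreover have "K > 0" unfolding K_def M_def by simp
      ultimately show ?thesis by (simp add: divide_le_eq)
    qed
  qed (use cov pack in auto)
qed

lemma Cov_Pack_hull_ball_growth:
  fixes x :: "'a::metric_space"
  assumes M: "class_M \<delta> D x \<Gamma>" and r: "r > 0"
    and L: "((\<lambda>T. ln (real (card (group_ball \<Gamma> x T))) / T) \<longlongrightarrow> L) at_top"
  defines "Y \<equiv> QC_Hull x (limit_set \<Gamma> x)"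
  shows "\<forall>T. Cov (cball x T \<inter> Y) r \<noteq> \<infinity> \<and> Pack (cball x T \<inter> Y) r \<noteq> \<infinity>"
    and "((\<lambda>T. ln (real (the_enat (Cov (cball x T \<inter> Y) r))) / T) \<longlongrightarrow> L) at_top"
    and "((\<lambda>T. ln (real (the_enat (Pack (cball x T \<inter> Y) r))) / T) \<longlongrightarrow> L) at_top"
proof -
  have \<Gamma>: "isom_group \<Gamma>" and dg: "discrete_group \<Gamma>" using M unfolding class_M_def by auto
  have D: "D \<ge> 0" by (rule class_M_codiameter_nonneg[OF M])
  obtain K where K: "K \<ge> 1"
    "\<And>T. Cov (cball x T \<inter> Y) r \<noteq> \<infinity>" "\<And>T. Pack (cball x T \<inter> Y) r \<noteq> \<infinity>"
    "\<And>T. T \<ge> 0 \<Longrightarrow> real (card (group_ball \<Gamma> x T)) / K \<le> real (the_enat (Pack (cball x T \<inter> Y) r))"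
    "\<And>T. the_enat (Pack (cball x T \<inter> Y) r) \<le> the_enat (Cov (cball x T \<inter> Y) r)"
    "\<And>T. real (the_enat (Cov (cball x T \<inter> Y) r)) \<le> K * real (card (group_ball \<Gamma> x (T + D)))"
    by (rule Pack_Cov_hull_ball_bounds[OF M r, folded Y_def]) (rule that)
  define f where "f T = real (card (group_ball \<Gamma> x T))" for T
  have pos: "f t > 0" if "t \<ge> 0" for t
    unfolding f_def using card_group_ball_ge_1[OF \<Gamma> dg that, of x] by simp
  have squeeze: "((\<lambda>T. ln (G T) / T) \<longlongrightarrow> L) at_top"
    if G: "\<And>T. T \<ge> 0 \<Longrightarrow> real (the_enat (Pack (cball x T \<inter> Y) r)) \<le> G T \<and>
      G T \<le> real (the_enat (Cov (cball x T \<inter> Y) r))" for G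
  proof (rule ln_growth_rate_squeeze[OF L[folded f_def] pos, where a=D])
    show "K > 0" using K(1) by simp
    show "eventually (\<lambda>T. f (T - D) / K \<le> G T \<and> G T \<le> K * f (T + D)) at_top"
    proof (rule eventually_mono[OF eventually_ge_at_top[of 0]])
      fix T :: real assume T: "T \<ge> 0"
      have "f (T - D) / K \<le> f T / K"
        using card_group_ball_mono[OF dg, of "T - D" T x] D K(1) unfolding f_def
        by (simp add: divide_right_mono)
      also have "\<dots> \<le> G T" using K(4)[OF T] G[OF T] unfolding f_def by linarith
      finally show "f (T - D) / K \<le> G T \<and> G T \<le> K * f (T + D)"
        using G[OF T] K(6)[of T] unfolding f_def by linarith
    qed
  qed
  show "\<forall>T. Cov (cball x T \<inter> Y) r \<noteq> \<infinity> \<and> Pack (cball x T \<inter> Y) r \<noteq> \<infinity>" using K(2,3) by blast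
  show "((\<lambda>T. ln (real (the_enat (Cov (cball x T \<inter> Y) r))) / T) \<longlongrightarrow> L) at_top"
    "((\<lambda>T. ln (real (the_enat (Pack (cball x T \<inter> Y) r))) / T) \<longlongrightarrow> L) at_top"
    using K(5) by (auto intro!: squeeze)
qed

theorem mainTheorem14:
  fixes \<delta> D :: real and x :: "'a::metric_space" and \<Gamma> :: "('a \<Rightarrow> 'a) set"
  assumes "\<delta> \<ge> 0" "D \<ge> 0" "class_M \<delta> D x \<Gamma>"
  defines "Y \<equiv> QC_Hull x (limit_set \<Gamma> x)"
  shows "crit_exp \<Gamma> x \<noteq> \<infinity> \<and> crit_exp \<Gamma> x \<noteq> - \<infinity> \<and>
    (\<forall>r>0. (\<forall>T. Cov (cball x T \<inter> Y) r \<noteq> \<infinity> \<and> Pack (cball x T \<inter> Y) r \<noteq> \<infinity>) \<and>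
      ((\<lambda>T. ereal (ln (real (the_enat (Cov (cball x T \<inter> Y) r))) / T)) \<longlongrightarrow> crit_exp \<Gamma> x) at_top \<and>
      ((\<lambda>T. ereal (ln (real (the_enat (Pack (cball x T \<inter> Y) r))) / T)) \<longlongrightarrow> crit_exp \<Gamma> x) at_top)"
proof -
  have M: "class_M \<delta> D x \<Gamma>" by fact
  then have "isom_group \<Gamma>" "discrete_group \<Gamma>" "torsion_free \<Gamma>"
    unfolding class_M_def by auto
  obtain L where L: "((\<lambda>T. ln (real (card (group_ball \<Gamma> x T))) / T) \<longlongrightarrow> L) at_top"
    using group_ball_growth_rate[OF M] by blast
  have "crit_exp \<Gamma> x = ereal L"
    by (rule crit_exp_eq_group_ball_growth[OF \<open>isom_group \<Gamma>\<close> \<open>discrete_group \<Gamma>\<close> \<open>torsion_free \<Gamma>\<close> L])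
  then show ?thesis
    using Cov_Pack_hull_ball_growth[OF M _ L] unfolding Y_def by (auto intro: tendsto_ereal)
qed
end
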